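(* Let $0<s_1<s_2<1$, $2s_1<d<\frac{2s_1s_2}{s_2-s_1}$, $a>0$, and assume $g$ satisfies $(G_1)$–$(G_2)$. Then there exists $K(a)>0$ small enough such that $$0<\sup_{u\in A}I(u)<\inf_{u\in B}I(u),$$ where $A=\{u\in S_a:|\nabla_{s_1}u|_2^2+|\nabla_{s_2}u|_2^2\le K(a)\}$ and $B=\{u\in S_a:|\nabla_{s_1}u|_2^2+|\nabla_{s_2}u|_2^2=2K(a)\}$.
   Context: For $s\in(0,1)$, $|\nabla_s u|_2^2=\int_{\mathbb{R}^d\times\mathbb{R}^d}\frac{|u(x)-u(y)|^2}{|x-y|^{d+2s}}dx\,dy$; $|\cdot|_p$ is the $L^p(\mathbb{R}^d)$ norm; $H^{s_1,s_2}(\mathbb{R}^d)=\{u\in L^2(\mathbb{R}^d):|\nabla_{s_1}u|_2<\infty,\ |\nabla_{s_2}u|_2<\infty\}$. $S_a=\{u\in H^{s_1,s_2}(\mathbb{R}^d):|u|_2^2=a\}$. $g:\mathbb{R}\to\mathbb{R}$, $G(s)=\int_0^sg$. $(G_1)$: $g$ continuous, odd. $(G_2)$: there exist $\alpha,\beta$ with $2+\frac{4s_2}{d}<\alpha<\beta<\frac{2d}{d-2s_1}$ and $\alpha G(s)\le g(s)s\le\beta G(s)$ for all $s$. $I(u)=\frac12|\nabla_{s_1}u|_2^2+\frac12|\nabla_{s_2}u|_2^2-\int_{\mathbb{R}^d}G(u)dx$. *)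

theory Defs
  imports "HOL-Analysis.Analysis"
begin

text \<open>Squared Gagliardo seminorm |nabla_s u|_2^2 as an extended nonnegative integral
  over R^d x R^d (no normalising constant, as in the paper).\<close>
definition gagliardo_sq :: "real \<Rightarrow> (real^'n \<Rightarrow> real) \<Rightarrow> ennreal" where
  "gagliardo_sq s u =
     (\<integral>\<^sup>+ z. ennreal ((u (fst z) - u (snd z))\<^sup>2 /
           norm (fst z - snd z) powr (real CARD('n) + 2 * s)) \<partial>(lborel \<Otimes>\<^sub>M lborel))"

definition frac_grad_sq :: "real \<Rightarrow> (real^'n \<Rightarrow> real) \<Rightarrow> real" where
  "frac_grad_sq s u = enn2real (gagliardo_sq s u)"

definition L2_norm_sq :: "(real^'n \<Rightarrow> real) \<Rightarrow> real" where
  "L2_norm_sq u = (\<integral>x. (u x)\<^sup>2 \<partial>lborel)"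

definition H_space :: "real \<Rightarrow> real \<Rightarrow> (real^'n \<Rightarrow> real) set" where
  "H_space s1 s2 = {u. u \<in> borel_measurable lborel \<and> integrable lborel (\<lambda>x. (u x)\<^sup>2)
      \<and> gagliardo_sq s1 u < \<infinity> \<and> gagliardo_sq s2 u < \<infinity>}"

definition S_sphere :: "real \<Rightarrow> real \<Rightarrow> real \<Rightarrow> (real^'n \<Rightarrow> real) set" where
  "S_sphere s1 s2 a = {u \<in> H_space s1 s2. L2_norm_sq u = a}"

definition primitive :: "(real \<Rightarrow> real) \<Rightarrow> real \<Rightarrow> real" where
  "primitive g s = (LBINT t=0..s. g t)"

definition energy :: "real \<Rightarrow> real \<Rightarrow> (real \<Rightarrow> real) \<Rightarrow> (real^'n \<Rightarrow> real) \<Rightarrow> real" where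
  "energy s1 s2 g u = frac_grad_sq s1 u / 2 + frac_grad_sq s2 u / 2
      - (\<integral>x. primitive g (u x) \<partial>lborel)"

end

(* Write F(u) for the sum of the two squared Gagliardo seminorms and G for the primitive of g.
   By (G2), 0 <= G(t) <= G(1) (|t|^alpha + |t|^beta).  On the sphere S_a a fractional
   Gagliardo-Nirenberg inequality bounds the L^p norm of u, for p = alpha, beta, by a power
   (p - 2) d / (4 s1) > 1 of the s1-seminorm, so near the origin the nonlinear term is at most
   an eighth of F(u).  For K small the energy is therefore at most K/2 and positive on A, and at
   least 3K/4 on B; A is nonempty because normalised tent functions of large radius lie in S_a
   and have arbitrarily small seminorms.

   The Gagliardo-Nirenberg inequality is proved from the seminorm directly: if |u(x)| > 2 lambda,
   then by the Markov inequality |u| <= lambda on half of a ball around x of known volume, which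
   bounds the measure of the level set {|u| > 2 lambda}.  Summing over dyadic levels and choosing
   the scale optimally gives the inequality whenever the L^p norm is finite, and truncation
   removes this restriction. *)

theory Submission
  imports Defs
begin

section \<open>The Gagliardo seminorm and its level sets\<close>

lemma gagliardo_sq_iterated:
  fixes u :: "real^'n \<Rightarrow> real"
  assumes [measurable]: "u \<in> borel_measurable lborel"
  shows "gagliardo_sq s u = (\<integral>\<^sup>+ x. \<integral>\<^sup>+ y. ennreal ((u x - u y)\<^sup>2 /
           norm (x - y) powr (real CARD('n) + 2 * s)) \<partial>lborel \<partial>lborel)"
proof -
  have "(\<lambda>z. ennreal ((u (fst z) - u (snd z))\<^sup>2 / norm (fst z - snd z) powr (real CARD('n) + 2 * s)))
      \<in> borel_measurable (lborel \<Otimes>\<^sub>M lborel)"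
    by measurable
  from lborel.nn_integral_fst[OF this] show ?thesis
    unfolding gagliardo_sq_def by simp
qed

lemma frac_grad_sq_nonneg [simp]: "0 \<le> frac_grad_sq s u"
  unfolding frac_grad_sq_def by simp

lemma gagliardo_sq_mono:
  assumes "\<And>x y. (v x - v y)\<^sup>2 \<le> (u x - u y)\<^sup>2"
  shows "gagliardo_sq s v \<le> gagliardo_sq s u"
  unfolding gagliardo_sq_def
  by (intro nn_integral_mono ennreal_leI divide_right_mono assms) simp

lemma gagliardo_sq_cmult:
  fixes u :: "real^'n \<Rightarrow> real"
  assumes [measurable]: "u \<in> borel_measurable borel"
  shows "gagliardo_sq s (\<lambda>x. c * u x) = ennreal (c\<^sup>2) * gagliardo_sq s u"
  unfolding gagliardo_sq_def
  by (subst nn_integral_cmult[symmetric], measurable)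
     (simp add: ennreal_mult'[symmetric] power_mult_distrib right_diff_distrib[symmetric])

lemma emeasure_abs_gt_le_powr_integral:
  fixes u :: "'a \<Rightarrow> real"
  assumes [measurable]: "u \<in> borel_measurable M" and lam: "lam > 0" and p: "p > 0"
    and N: "N \<ge> 0" and intp: "(\<integral>\<^sup>+ x. ennreal (\<bar>u x\<bar> powr p) \<partial>M) \<le> ennreal N"
  shows "emeasure M {x \<in> space M. lam < \<bar>u x\<bar>} \<le> ennreal (N / lam powr p)"
proof -
  have "emeasure M {x \<in> space M. lam < \<bar>u x\<bar>} = (\<integral>\<^sup>+ x. indicator {x \<in> space M. lam < \<bar>u x\<bar>} x \<partial>M)"
    by (simp add: nn_integral_indicator)
  also have "\<dots> \<le> (\<integral>\<^sup>+ x. ennreal (1 / lam powr p) * ennreal (\<bar>u x\<bar> powr p) \<partial>M)"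
  proof (rule nn_integral_mono)
    fix x
    have "lam < \<bar>u x\<bar> \<Longrightarrow> 1 \<le> 1 / lam powr p * \<bar>u x\<bar> powr p"
      using lam p powr_mono2[of p lam "\<bar>u x\<bar>"] by (simp add: field_simps)
    then show "indicator {x \<in> space M. lam < \<bar>u x\<bar>} x \<le> ennreal (1 / lam powr p) * ennreal (\<bar>u x\<bar> powr p)"
      using lam by (auto simp: indicator_def ennreal_mult'[symmetric])
  qed
  also have "\<dots> = ennreal (1 / lam powr p) * (\<integral>\<^sup>+ x. ennreal (\<bar>u x\<bar> powr p) \<partial>M)"
    by (rule nn_integral_cmult) measurable
  also have "\<dots> \<le> ennreal (1 / lam powr p) * ennreal N"
    by (intro mult_left_mono intp) auto
  also have "\<dots> = ennreal (N / lam powr p)"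
    using lam N by (simp add: ennreal_mult'[symmetric])
  finally show ?thesis .
qed

text \<open>On the part of the ball where \<open>|u| \<le> \<lambda>\<close>, which has at least half its volume,
  \<open>|u x - u y| > \<lambda>\<close>.\<close>
lemma gagliardo_slice_lower_bound:
  fixes u :: "real^'n \<Rightarrow> real"
  assumes [measurable]: "u \<in> borel_measurable lborel"
    and lam: "lam > 0" and r: "r > 0" and e: "e > 0" and m: "m \<ge> 0"
    and ux: "2 * lam < \<bar>u x\<bar>"
    and level: "emeasure lborel {y. lam < \<bar>u y\<bar>} \<le> ennreal m"
    and ball: "emeasure lborel (cball x r) = ennreal (2 * m)"
  shows "ennreal (lam\<^sup>2 / r powr e * m)
    \<le> (\<integral>\<^sup>+ y. ennreal ((u x - u y)\<^sup>2 / norm (x - y) powr e) \<partial>lborel)"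
proof -
  define B where "B = cball x r \<inter> {y. \<bar>u y\<bar> \<le> lam}"
  have [measurable]: "B \<in> sets borel" unfolding B_def by measurable
  have "ennreal m + ennreal m = emeasure lborel (cball x r)"
    using ball m by (simp flip: ennreal_plus)
  also have "\<dots> \<le> emeasure lborel (B \<union> {y. lam < \<bar>u y\<bar>})"
    by (rule emeasure_mono) (auto simp: B_def)
  also have "\<dots> \<le> emeasure lborel B + emeasure lborel {y. lam < \<bar>u y\<bar>}"
    by (rule emeasure_subadditive) auto
  also have "\<dots> \<le> emeasure lborel B + ennreal m"
    using level by (rule add_left_mono)
  finally have mB: "ennreal m \<le> emeasure lborel B"
    by (simp add: add.commute ennreal_add_left_cancel_le)
  have "ennreal (lam\<^sup>2 / r powr e * m) = ennreal (lam\<^sup>2 / r powr e) * ennreal m"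
    by (intro ennreal_mult') simp
  also have "\<dots> \<le> ennreal (lam\<^sup>2 / r powr e) * emeasure lborel B"
    using mB by (rule mult_left_mono) simp
  also have "\<dots> = (\<integral>\<^sup>+ y. ennreal (lam\<^sup>2 / r powr e) * indicator B y \<partial>lborel)"
    by (simp add: nn_integral_cmult_indicator)
  also have "\<dots> \<le> (\<integral>\<^sup>+ y. ennreal ((u x - u y)\<^sup>2 / norm (x - y) powr e) \<partial>lborel)"
  proof (rule nn_integral_mono)
    fix y
    show "ennreal (lam\<^sup>2 / r powr e) * indicator B y \<le> ennreal ((u x - u y)\<^sup>2 / norm (x - y) powr e)"
    proof (cases "y \<in> B")
      case True
      then have uy: "\<bar>u y\<bar> \<le> lam" and xy: "dist x y \<le> r" by (auto simp: B_def)
      have gt: "lam < \<bar>u x - u y\<bar>" using ux uy by linarith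
      then have "norm (x - y) > 0" using lam by auto
      moreover have "norm (x - y) powr e \<le> r powr e"
        using xy e by (intro powr_mono2) (auto simp: dist_norm)
      moreover have "lam\<^sup>2 \<le> (u x - u y)\<^sup>2"
        using gt lam by (metis less_imp_le power2_abs power_mono)
      ultimately have "lam\<^sup>2 / r powr e \<le> (u x - u y)\<^sup>2 / norm (x - y) powr e"
        by (intro frac_le) auto
      then show ?thesis using True by (simp add: ennreal_leI)
    qed simp
  qed
  finally show ?thesis .
qed

text \<open>The radius \<open>r\<close> of a ball of volume \<open>2 m\<close>, with \<open>m = N / \<lambda>\<^sup>p\<close> the Markov bound on
  \<open>|{|u| > \<lambda>}|\<close>, raised to the power \<open>d + 2 s\<close>.\<close>
lemma level_radius_powr:
  fixes lam N \<omega> d s p :: real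
  assumes lam: "lam > 0" and N: "N > 0" and \<omega>: "\<omega> > 0" and d: "d > 0"
  shows "((2 * (N / lam powr p) / \<omega>) powr (1 / d)) powr (d + 2 * s)
    = (2 / \<omega>) powr (1 + 2 * s / d) * N powr (2 * s / d) * lam powr (- (2 + 2 * s / d * p))
      * (lam\<^sup>2 * (N / lam powr p))"
proof -
  define t where "t = 2 * s / d"
  define m where "m = N / lam powr p"
  have m: "m > 0" unfolding m_def using N lam by simp
  have "((2 * m / \<omega>) powr (1 / d)) powr (d + 2 * s) = (2 * m / \<omega>) powr (1 + t)"
    unfolding t_def using d by (simp add: powr_powr field_simps)
  also have "\<dots> = (2 / \<omega>) powr (1 + t) * m powr t * m"
    using m \<omega> by (subst times_divide_eq_left[symmetric], subst powr_mult) (simp_all add: powr_add)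
  also have "m powr t = N powr t * lam powr (- (t * p))"
  proof -
    have "m = N * lam powr (- p)" unfolding m_def by (simp add: powr_minus divide_inverse)
    then show ?thesis using N by (simp only:) (subst powr_mult, auto simp: powr_powr mult.commute)
  qed
  also have "lam powr (- (t * p)) = lam powr (- (2 + t * p)) * lam\<^sup>2"
  proof -
    have "lam powr (- (2 + t * p)) * lam powr 2 = lam powr (- (t * p))"
      by (simp add: powr_add[symmetric])
    then show ?thesis using lam by (simp add: powr_numeral)
  qed
  finally show ?thesis unfolding t_def m_def by (simp only: ac_simps)
qed

lemma emeasure_level_set_le_gagliardo:
  fixes u :: "real^'n \<Rightarrow> real"
  defines "d \<equiv> real CARD('n)"
  assumes u[measurable]: "u \<in> borel_measurable lborel"
    and lam: "lam > 0" and p: "p > 0" and s: "s > 0" and N: "N > 0"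
    and intp: "(\<integral>\<^sup>+ x. ennreal (\<bar>u x\<bar> powr p) \<partial>lborel) \<le> ennreal N"
  shows "emeasure lborel {x. 2 * lam < \<bar>u x\<bar>}
    \<le> ennreal ((2 / unit_ball_vol d) powr (1 + 2 * s / d) * N powr (2 * s / d)
          * lam powr (- (2 + 2 * s / d * p))) * gagliardo_sq s u"
proof -
  define \<omega> where "\<omega> = unit_ball_vol d"
  define t where "t = 2 * s / d"
  define c where "c = (2 / \<omega>) powr (1 + t) * N powr t * lam powr (- (2 + t * p))"
  define m where "m = N / lam powr p"
  define r where "r = (2 * m / \<omega>) powr (1 / d)"
  have d: "d > 0" and \<omega>: "\<omega> > 0" unfolding d_def \<omega>_def by simp_all
  have m: "m > 0" and r: "r > 0" and c: "c > 0"
    unfolding m_def r_def c_def using N lam \<omega> by simp_all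
  have ball: "emeasure lborel (cball x r) = ennreal (2 * m)" for x :: "real^'n"
  proof -
    have "r ^ CARD('n) = 2 * m / \<omega>"
      using r m \<omega> d by (simp add: r_def d_def powr_powr flip: powr_realpow)
    then show ?thesis using emeasure_cball[of r x] r \<omega> unfolding \<omega>_def d_def by simp
  qed
  have level: "emeasure lborel {y. lam < \<bar>u y\<bar>} \<le> ennreal m"
    using emeasure_abs_gt_le_powr_integral[OF _ lam p _ intp] N unfolding m_def by simp
  have "r powr (d + 2 * s) = c * (lam\<^sup>2 * m)"
    unfolding r_def c_def m_def t_def by (rule level_radius_powr[OF lam N \<omega> d])
  then have c_inv: "c * (lam\<^sup>2 / r powr (d + 2 * s) * m) = 1"
    using c lam m by simp
  have "indicator {x. 2 * lam < \<bar>u x\<bar>} x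
      \<le> ennreal c * (\<integral>\<^sup>+ y. ennreal ((u x - u y)\<^sup>2 / norm (x - y) powr (d + 2 * s)) \<partial>lborel)" for x
  proof (cases "2 * lam < \<bar>u x\<bar>")
    case True
    have "(1::ennreal) = ennreal (c * (lam\<^sup>2 / r powr (d + 2 * s) * m))"
      unfolding c_inv by simp
    also have "\<dots> = ennreal c * ennreal (lam\<^sup>2 / r powr (d + 2 * s) * m)"
      using c by (intro ennreal_mult') simp
    also have "\<dots> \<le> ennreal c * (\<integral>\<^sup>+ y. ennreal ((u x - u y)\<^sup>2 / norm (x - y) powr (d + 2 * s)) \<partial>lborel)"
      using gagliardo_slice_lower_bound[OF _ lam r _ _ True level ball] m d s
      by (intro mult_left_mono) auto
    finally show ?thesis using True by simp
  qed simp
  then have "(\<integral>\<^sup>+ x. indicator {x. 2 * lam < \<bar>u x\<bar>} x \<partial>lborel)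
      \<le> (\<integral>\<^sup>+ x. ennreal c * (\<integral>\<^sup>+ y. ennreal ((u x - u y)\<^sup>2 / norm (x - y) powr (d + 2 * s)) \<partial>lborel) \<partial>lborel)"
    by (rule nn_integral_mono)
  also have "\<dots> = ennreal c * gagliardo_sq s u"
    unfolding gagliardo_sq_iterated[OF u] d_def by (rule nn_integral_cmult) measurable
  finally show ?thesis unfolding c_def t_def \<omega>_def by simp
qed

section \<open>A fractional Gagliardo--Nirenberg inequality\<close>

lemma ennreal_term_le_suminf: "f k \<le> (\<Sum>i. f i :: ennreal)"
  using sum_le_suminf[OF summableI, of "{k}" f] by simp

lemma dyadic_bracket:
  fixes m :: real
  assumes "m > 1"
  obtains k :: nat where "2 ^ k < m" "m \<le> 2 ^ (k + 1)"
proof -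
  obtain n :: nat where "m < 2 ^ n" using real_arch_pow[of 2 m] by auto
  then have ex: "\<exists>j::nat. m \<le> 2 ^ j" by (auto intro: less_imp_le)
  define j where "j = (LEAST j::nat. m \<le> 2 ^ j)"
  have mj: "m \<le> 2 ^ j" unfolding j_def by (rule LeastI_ex[OF ex])
  have "j \<noteq> 0" using mj assms by (intro notI) simp
  then obtain k where k: "j = k + 1" by (metis Suc_eq_plus1 not0_implies_Suc)
  have "\<not> m \<le> 2 ^ k" using k unfolding j_def by (metis Least_le Suc_n_not_le_n Suc_eq_plus1)
  then show ?thesis using that[of k] mj k by (simp add: not_le)
qed

lemma abs_powr_le_powr_times_square:
  fixes t T p :: real
  assumes "\<bar>t\<bar> \<le> T" and "p \<ge> 2"
  shows "\<bar>t\<bar> powr p \<le> T powr (p - 2) * t\<^sup>2"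
proof (cases "t = 0")
  case False
  have "\<bar>t\<bar> powr p = \<bar>t\<bar> powr (p - 2) * \<bar>t\<bar> powr 2"
    by (subst powr_add[symmetric]) simp
  also have "\<dots> \<le> T powr (p - 2) * \<bar>t\<bar> powr 2"
    using assms by (intro mult_right_mono powr_mono2) auto
  finally show ?thesis using False by (simp add: powr_numeral)
qed (use assms in simp)

lemma powr_le_dyadic_level_sum:
  fixes t T p :: real
  assumes T: "T > 0" and p: "p \<ge> 2"
  shows "ennreal (\<bar>t\<bar> powr p) \<le> ennreal ((2 * T) powr (p - 2) * t\<^sup>2)
     + (\<Sum>k. ennreal ((2 ^ (k + 2) * T) powr p) * indicator {x. 2 * (2 ^ k * T) < x} \<bar>t\<bar>)"
proof (cases "\<bar>t\<bar> \<le> 2 * T")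
  case True
  then show ?thesis
    using abs_powr_le_powr_times_square[OF True p] by (simp add: add_increasing2)
next
  case False
  then have "\<bar>t\<bar> / (2 * T) > 1" using T by simp
  then obtain k :: nat where k: "2 ^ k < \<bar>t\<bar> / (2 * T)" "\<bar>t\<bar> / (2 * T) \<le> 2 ^ (k + 1)"
    by (rule dyadic_bracket)
  have lower: "2 * (2 ^ k * T) < \<bar>t\<bar>" and upper: "\<bar>t\<bar> \<le> 2 ^ (k + 2) * T"
    using k T by (simp_all add: field_simps)
  have "ennreal (\<bar>t\<bar> powr p) \<le> ennreal ((2 ^ (k + 2) * T) powr p) * indicator {x. 2 * (2 ^ k * T) < x} \<bar>t\<bar>"
    using upper lower p by (simp add: ennreal_leI powr_mono2)
  also have "\<dots> \<le> (\<Sum>k. ennreal ((2 ^ (k + 2) * T) powr p) * indicator {x. 2 * (2 ^ k * T) < x} \<bar>t\<bar>)"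
    by (rule ennreal_term_le_suminf)
  finally show ?thesis by (simp add: add_increasing)
qed

lemma dyadic_powr_product:
  fixes T p q :: real
  assumes T: "T > 0"
  shows "(2 ^ (k + 2) * T) powr p * (2 ^ k * T) powr (- q)
    = 4 powr p * T powr (p - q) * (2 powr (p - q)) ^ k"
proof -
  have pow2: "((2::real) ^ n) powr x = 2 powr (real n * x)" for n x
    by (simp add: powr_realpow[symmetric] powr_powr)
  have "(2 ^ (k + 2) * T) powr p = 2 powr (real (k + 2) * p) * T powr p"
    using T by (subst powr_mult) (simp_all only: pow2 zero_le_power zero_le_numeral less_imp_le)
  moreover have "(2 ^ k * T) powr (- q) = 2 powr (real k * (- q)) * T powr (- q)"
    using T by (subst powr_mult) (simp_all only: pow2 zero_le_power zero_le_numeral less_imp_le)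
  ultimately have "(2 ^ (k + 2) * T) powr p * (2 ^ k * T) powr (- q)
      = 2 powr (real (k + 2) * p) * 2 powr (real k * (- q)) * (T powr p * T powr (- q))"
    by simp
  also have "\<dots> = 2 powr (2 * p) * 2 powr (real k * (p - q)) * T powr (p - q)"
    by (simp add: powr_add[symmetric] algebra_simps)
  also have "2 powr (2 * p) = (4::real) powr p"
    by (simp add: powr_powr[symmetric])
  also have "2 powr (real k * (p - q)) = (2 powr (p - q)) ^ k"
    by (simp add: powr_realpow[symmetric] powr_powr mult.commute)
  finally show ?thesis by (simp only: ac_simps)
qed

lemma nn_integral_powr_le_dyadic_levels:
  fixes u :: "'a \<Rightarrow> real"
  assumes [measurable]: "u \<in> borel_measurable M" and T: "T > 0" and p: "p \<ge> 2" and q: "q > p"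
    and K: "K \<ge> 0" and A: "A \<ge> 0"
    and L2: "(\<integral>\<^sup>+ x. ennreal ((u x)\<^sup>2) \<partial>M) \<le> ennreal A"
    and level: "\<And>k::nat. emeasure M {x \<in> space M. 2 * (2 ^ k * T) < \<bar>u x\<bar>} \<le> ennreal (K * (2 ^ k * T) powr (- q))"
  shows "(\<integral>\<^sup>+ x. ennreal (\<bar>u x\<bar> powr p) \<partial>M)
     \<le> ennreal ((2 * T) powr (p - 2) * A + 4 powr p * K * T powr (p - q) / (1 - 2 powr (p - q)))"
proof -
  define c where "c k = ennreal ((2 ^ (k + 2) * T) powr p)" for k :: nat
  define S where "S k = {x \<in> space M. 2 * (2 ^ k * T) < \<bar>u x\<bar>}" for k :: nat
  define a where "a = 4 powr p * K * T powr (p - q)"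
  have [measurable]: "S k \<in> sets M" for k unfolding S_def by measurable
  have ratio: "2 powr (p - q) < 1" using q by (simp add: powr_less_one)
  have "(\<integral>\<^sup>+ x. ennreal (\<bar>u x\<bar> powr p) \<partial>M)
      \<le> (\<integral>\<^sup>+ x. ennreal ((2 * T) powr (p - 2)) * ennreal ((u x)\<^sup>2) + (\<Sum>k. c k * indicator (S k) x) \<partial>M)"
  proof (rule nn_integral_mono)
    fix x assume "x \<in> space M"
    then have "indicator (S k) x = (indicator {t. 2 * (2 ^ k * T) < t} \<bar>u x\<bar> :: ennreal)" for k
      unfolding S_def by (simp add: indicator_def)
    then show "ennreal (\<bar>u x\<bar> powr p) \<le> ennreal ((2 * T) powr (p - 2)) * ennreal ((u x)\<^sup>2) + (\<Sum>k. c k * indicator (S k) x)"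
      using powr_le_dyadic_level_sum[OF T p, of "u x"] T unfolding c_def by (simp add: ennreal_mult')
  qed
  also have "\<dots> = ennreal ((2 * T) powr (p - 2)) * (\<integral>\<^sup>+ x. ennreal ((u x)\<^sup>2) \<partial>M)
      + (\<Sum>k. c k * emeasure M (S k))"
    by (subst nn_integral_add) (auto simp: nn_integral_cmult nn_integral_suminf nn_integral_cmult_indicator)
  also have "\<dots> \<le> ennreal ((2 * T) powr (p - 2)) * ennreal A + (\<Sum>k. ennreal (a * (2 powr (p - q)) ^ k))"
  proof (intro add_mono mult_left_mono L2 suminf_le summableI)
    fix k
    have "c k * emeasure M (S k) \<le> c k * ennreal (K * (2 ^ k * T) powr (- q))"
      unfolding S_def by (intro mult_left_mono level) auto
    also have "\<dots> = ennreal (a * (2 powr (p - q)) ^ k)"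
      unfolding c_def a_def using K dyadic_powr_product[OF T, of k p q]
      by (simp add: ennreal_mult'[symmetric] algebra_simps)
    finally show "c k * emeasure M (S k) \<le> ennreal (a * (2 powr (p - q)) ^ k)" .
  qed auto
  also have "(\<Sum>k. ennreal (a * (2 powr (p - q)) ^ k)) = ennreal (a / (1 - 2 powr (p - q)))"
  proof (rule suminf_ennreal_eq)
    show "0 \<le> a * (2 powr (p - q)) ^ k" for k unfolding a_def using K by simp
    show "(\<lambda>k. a * (2 powr (p - q)) ^ k) sums (a / (1 - 2 powr (p - q)))"
      using sums_mult[OF geometric_sums, of "2 powr (p - q)" a] ratio by simp
  qed
  finally show ?thesis
    unfolding a_def using A K ratio by (simp add: ennreal_mult' ennreal_plus)
qed

lemma nonpos_of_forall_powr_bound: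
  fixes N A p :: real
  assumes p: "p > 2" and A: "A \<ge> 0" and H: "\<And>T. T > 0 \<Longrightarrow> N \<le> (2 * T) powr (p - 2) * A"
  shows "N \<le> 0"
proof (rule ccontr)
  assume "\<not> N \<le> 0"
  then have N: "N > 0" by simp
  define T where "T = (N / (2 * (A + 1))) powr (1 / (p - 2)) / 2"
  have "T > 0" unfolding T_def using N A by simp
  moreover have "(2 * T) powr (p - 2) = N / (2 * (A + 1))"
    unfolding T_def using N A p by (simp add: powr_powr)
  ultimately have "N \<le> N / (2 * (A + 1)) * A" using H by metis
  moreover have "N / (2 * (A + 1)) * A < N"
    using N A by (simp add: field_simps) (smt (verit) mult_nonneg_nonneg)
  ultimately show False by simp
qed

lemma le_of_forall_scale_bound:
  fixes N A p Q \<theta> K q :: real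
  assumes p: "p > 2" and A: "A \<ge> 0" and N: "N > 0" and Q: "Q > 0" and \<theta>: "\<theta> > 0" and K: "K \<ge> 0"
    and q: "q = 2 + \<theta> * p"
    and H: "\<And>T. T > 0 \<Longrightarrow> N \<le> (2 * T) powr (p - 2) * A + K * N powr \<theta> * Q * T powr (p - q)"
  shows "N \<le> (2 powr (p - 2) * A + K) powr (p / 2) * Q powr ((p - 2) / (2 * \<theta>))"
proof -
  define Z where "Z = N powr \<theta> * Q"
  define e where "e = (p - 2) / (\<theta> * p)"
  define T where "T = Z powr (1 / (q - 2))"
  define C where "C = 2 powr (p - 2) * A + K"
  have Z: "Z > 0" and T: "T > 0" and C: "C \<ge> 0"
    unfolding Z_def T_def C_def using N Q A K by simp_all
  have qp: "q - 2 = \<theta> * p" using q by simp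
  have T1: "T powr (p - 2) = Z powr e"
    unfolding T_def e_def qp using Z by (simp add: powr_powr)
  have "Z * T powr (p - q) = Z powr (1 + (p - q) / (q - 2))"
    unfolding T_def using Z by (simp add: powr_powr powr_add)
  also have "1 + (p - q) / (q - 2) = e"
    unfolding e_def qp q using \<theta> p by (simp add: field_simps)
  finally have T2: "Z * T powr (p - q) = Z powr e" .
  have "N \<le> (2 * T) powr (p - 2) * A + K * (Z * T powr (p - q))"
    using H[OF T] unfolding Z_def by (simp add: algebra_simps)
  also have "(2 * T) powr (p - 2) = 2 powr (p - 2) * T powr (p - 2)"
    using T by (simp add: powr_mult)
  finally have "N \<le> C * Z powr e"
    unfolding T1 T2 C_def by (simp add: algebra_simps)
  also have "Z powr e = N powr ((p - 2) / p) * Q powr e"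
    unfolding Z_def e_def using N Q \<theta> p by (simp add: powr_mult powr_powr)
  finally have "N powr ((p - 2) / p) * N powr (2 / p) \<le> N powr ((p - 2) / p) * (C * Q powr e)"
    using N p by (simp add: powr_add[symmetric] diff_divide_distrib algebra_simps)
  then have "N powr (2 / p) \<le> C * Q powr e" using N by simp
  then have "(N powr (2 / p)) powr (p / 2) \<le> (C * Q powr e) powr (p / 2)"
    using p by (intro powr_mono2) auto
  then show ?thesis
    unfolding e_def C_def[symmetric] using N C Q p \<theta>
    by (simp add: powr_powr powr_mult mult.commute)
qed

text \<open>The constant obtained from \<open>le_of_forall_scale_bound\<close> when the level sets are bounded by
  \<open>emeasure_level_set_le_gagliardo\<close> and summed by \<open>nn_integral_powr_le_dyadic_levels\<close>.\<close>
definition gn_const :: "real \<Rightarrow> real \<Rightarrow> real \<Rightarrow> real \<Rightarrow> real" where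
  "gn_const A p s d = (2 powr (p - 2) * A + 4 powr p / (1 - 2 powr (p - (2 + 2 * s / d * p)))
        * (2 / unit_ball_vol d) powr (1 + 2 * s / d)) powr (p / 2)"

lemma gn_const_nonneg: "gn_const A p s d \<ge> 0"
  unfolding gn_const_def by simp

lemma gagliardo_nirenberg_finite:
  fixes u :: "real^'n \<Rightarrow> real"
  defines "d \<equiv> real CARD('n)"
  assumes u[measurable]: "u \<in> borel_measurable lborel" and s: "s > 0"
    and p: "p > 2" "p < 2 + 2 * s / d * p"
    and A: "A \<ge> 0" and L2: "(\<integral>\<^sup>+ x. ennreal ((u x)\<^sup>2) \<partial>lborel) \<le> ennreal A"
    and N: "N \<ge> 0" and intp: "(\<integral>\<^sup>+ x. ennreal (\<bar>u x\<bar> powr p) \<partial>lborel) = ennreal N"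
    and Q: "Q \<ge> 0" and gag: "gagliardo_sq s u = ennreal Q"
  shows "N \<le> gn_const A p s d * Q powr ((p - 2) * d / (4 * s))"
proof (cases "N = 0")
  case True
  then show ?thesis using gn_const_nonneg by simp
next
  case False
  then have N: "N > 0" using N by simp
  define \<theta> where "\<theta> = 2 * s / d"
  define q where "q = 2 + \<theta> * p"
  define D where "D = (2 / unit_ball_vol d) powr (1 + \<theta>)"
  define K where "K = 4 powr p / (1 - 2 powr (p - q)) * D"
  have d: "d > 0" unfolding d_def by simp
  have \<theta>: "\<theta> > 0" unfolding \<theta>_def using s d by simp
  have qp: "q > p" unfolding q_def \<theta>_def using p by (simp add: mult.commute)
  then have ratio: "2 powr (p - q) < 1" by (simp add: powr_less_one)
  have D: "D \<ge> 0" and K: "K \<ge> 0" unfolding K_def D_def using ratio by simp_all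
  have scale_bound: "N \<le> (2 * T) powr (p - 2) * A + K * N powr \<theta> * Q * T powr (p - q)"
    if T: "T > 0" for T
  proof -
    have "emeasure lborel {x \<in> space lborel. 2 * (2 ^ k * T) < \<bar>u x\<bar>}
        \<le> ennreal (D * N powr \<theta> * Q * (2 ^ k * T) powr (- q))" for k :: nat
    proof -
      have "emeasure lborel {x. 2 * (2 ^ k * T) < \<bar>u x\<bar>}
          \<le> ennreal (D * N powr \<theta> * (2 ^ k * T) powr (- q)) * ennreal Q"
        using emeasure_level_set_le_gagliardo[OF u _ _ s N, of "2 ^ k * T" p] T p intp gag
        unfolding D_def \<theta>_def q_def d_def by (simp add: mult.commute)
      then show ?thesis using Q D by (simp add: ennreal_mult'' mult_ac)
    qed
    then have "ennreal N \<le> ennreal ((2 * T) powr (p - 2) * A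
        + 4 powr p * (D * N powr \<theta> * Q) * T powr (p - q) / (1 - 2 powr (p - q)))"
      unfolding intp[symmetric] using p D Q
      by (intro nn_integral_powr_le_dyadic_levels[OF u T _ qp _ A L2]) auto
    then have "N \<le> (2 * T) powr (p - 2) * A
        + 4 powr p * (D * N powr \<theta> * Q) * T powr (p - q) / (1 - 2 powr (p - q))"
      using A D Q ratio by (subst (asm) ennreal_le_iff) auto
    then show ?thesis unfolding K_def by (simp add: mult_ac)
  qed
  have "N \<le> (2 powr (p - 2) * A + K) powr (p / 2) * Q powr ((p - 2) / (2 * \<theta>))" if "Q > 0"
    using le_of_forall_scale_bound[OF p(1) A N that \<theta> K q_def] scale_bound by blast
  moreover have "N \<le> 0" if "Q = 0"
    using nonpos_of_forall_powr_bound[OF p(1) A, of N] scale_bound that by simp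
  ultimately show ?thesis
    using Q N unfolding gn_const_def K_def D_def q_def \<theta>_def
    by (cases "Q = 0") (auto simp: field_simps)
qed

lemma clamp_diff_square_le: "(max (- M) (min M a) - max (- M) (min M b))\<^sup>2 \<le> ((a::real) - b)\<^sup>2"
proof -
  have "\<bar>max (- M) (min M a) - max (- M) (min M b)\<bar> \<le> \<bar>a - b\<bar>" by (auto simp: max_def min_def)
  then show ?thesis by (metis abs_ge_zero power2_abs power_mono)
qed

lemma nn_integral_abs_powr_finite_of_bounded:
  fixes v :: "'a \<Rightarrow> real"
  assumes [measurable]: "v \<in> borel_measurable M" and bound: "\<And>x. \<bar>v x\<bar> \<le> B" and p: "p \<ge> 2"
    and L2: "(\<integral>\<^sup>+ x. ennreal ((v x)\<^sup>2) \<partial>M) < \<infinity>"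
  shows "(\<integral>\<^sup>+ x. ennreal (\<bar>v x\<bar> powr p) \<partial>M) < \<infinity>"
proof -
  have "(\<integral>\<^sup>+ x. ennreal (\<bar>v x\<bar> powr p) \<partial>M) \<le> (\<integral>\<^sup>+ x. ennreal (B powr (p - 2)) * ennreal ((v x)\<^sup>2) \<partial>M)"
    using abs_powr_le_powr_times_square[OF bound p]
    by (intro nn_integral_mono) (simp add: ennreal_mult'[symmetric] ennreal_leI)
  also have "\<dots> = ennreal (B powr (p - 2)) * (\<integral>\<^sup>+ x. ennreal ((v x)\<^sup>2) \<partial>M)"
    by (rule nn_integral_cmult) measurable
  also have "\<dots> < \<infinity>" using L2 by (simp add: ennreal_mult_less_top)
  finally show ?thesis .
qed

lemma nn_integral_abs_powr_eq_SUP_clamp: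
  fixes u :: "'a \<Rightarrow> real"
  assumes [measurable]: "u \<in> borel_measurable M" and p: "p > 0"
  shows "(\<integral>\<^sup>+ x. ennreal (\<bar>u x\<bar> powr p) \<partial>M)
    = (SUP n::nat. \<integral>\<^sup>+ x. ennreal (\<bar>max (- real n) (min (real n) (u x))\<bar> powr p) \<partial>M)"
proof -
  define v where "v n x = max (- real n) (min (real n) (u x))" for n :: nat and x
  have pointwise: "ennreal (\<bar>u x\<bar> powr p) = (SUP n. ennreal (\<bar>v n x\<bar> powr p))" for x
  proof -
    have mono: "mono (\<lambda>n. ennreal (\<bar>v n x\<bar> powr p))"
      unfolding v_def using p by (intro monoI ennreal_leI powr_mono2) (auto simp: max_def min_def)
    obtain n0 :: nat where "\<bar>u x\<bar> \<le> real n0" using real_arch_simple by blast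
    then have "\<forall>n\<ge>n0. v n x = u x" unfolding v_def by (auto simp: max_def min_def)
    then have "(\<lambda>n. ennreal (\<bar>v n x\<bar> powr p)) \<longlonglongrightarrow> ennreal (\<bar>u x\<bar> powr p)"
      by (intro tendsto_eventually) (auto simp: eventually_sequentially intro!: exI[of _ n0])
    then show "ennreal (\<bar>u x\<bar> powr p) = (SUP n. ennreal (\<bar>v n x\<bar> powr p))"
      using LIMSEQ_unique[OF _ LIMSEQ_SUP[OF mono]] by blast
  qed
  have "(\<integral>\<^sup>+ x. ennreal (\<bar>u x\<bar> powr p) \<partial>M) = (\<integral>\<^sup>+ x. (SUP n. ennreal (\<bar>v n x\<bar> powr p)) \<partial>M)"
    by (simp only: pointwise)
  also have "\<dots> = (SUP n. \<integral>\<^sup>+ x. ennreal (\<bar>v n x\<bar> powr p) \<partial>M)"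
  proof (rule nn_integral_monotone_convergence_SUP)
    show "incseq (\<lambda>n x. ennreal (\<bar>v n x\<bar> powr p))"
      unfolding incseq_def le_fun_def v_def using p
      by (auto intro!: ennreal_leI powr_mono2 simp: max_def min_def)
  qed (unfold v_def, measurable)
  finally show ?thesis unfolding v_def .
qed

lemma gagliardo_nirenberg:
  fixes u :: "real^'n \<Rightarrow> real"
  defines "d \<equiv> real CARD('n)"
  assumes [measurable]: "u \<in> borel_measurable lborel" and s: "s > 0"
    and p: "p > 2" "p < 2 + 2 * s / d * p"
    and A: "A \<ge> 0" and L2: "(\<integral>\<^sup>+ x. ennreal ((u x)\<^sup>2) \<partial>lborel) \<le> ennreal A"
    and Q: "Q \<ge> 0" and gag: "gagliardo_sq s u = ennreal Q"
  shows "(\<integral>\<^sup>+ x. ennreal (\<bar>u x\<bar> powr p) \<partial>lborel) \<le> ennreal (gn_const A p s d * Q powr ((p - 2) * d / (4 * s)))"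
proof -
  define \<gamma> where "\<gamma> = (p - 2) * d / (4 * s)"
  define v where "v n x = max (- real n) (min (real n) (u x))" for n :: nat and x
  have \<gamma>: "\<gamma> \<ge> 0" unfolding \<gamma>_def d_def using p s by simp
  have bound: "(\<integral>\<^sup>+ x. ennreal (\<bar>v n x\<bar> powr p) \<partial>lborel) \<le> ennreal (gn_const A p s d * Q powr \<gamma>)" for n
  proof -
    have v[measurable]: "v n \<in> borel_measurable lborel" unfolding v_def by measurable
    have L2n: "(\<integral>\<^sup>+ x. ennreal ((v n x)\<^sup>2) \<partial>lborel) \<le> ennreal A"
      unfolding v_def
      by (intro order.trans[OF nn_integral_mono L2] ennreal_leI) (auto simp flip: abs_le_square_iff)
    have "\<bar>v n x\<bar> \<le> real n" for x unfolding v_def by auto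
    from nn_integral_abs_powr_finite_of_bounded[OF v this, of p] L2n p
    have "(\<integral>\<^sup>+ x. ennreal (\<bar>v n x\<bar> powr p) \<partial>lborel) < \<infinity>"
      by (simp add: order.strict_trans1)
    then obtain N where N: "N \<ge> 0" "(\<integral>\<^sup>+ x. ennreal (\<bar>v n x\<bar> powr p) \<partial>lborel) = ennreal N"
      by (cases "\<integral>\<^sup>+ x. ennreal (\<bar>v n x\<bar> powr p) \<partial>lborel") auto
    have gag_n: "gagliardo_sq s (v n) \<le> ennreal Q"
      unfolding gag[symmetric] v_def by (rule gagliardo_sq_mono) (rule clamp_diff_square_le)
    then obtain Qn where Qn: "0 \<le> Qn" "Qn \<le> Q" "gagliardo_sq s (v n) = ennreal Qn"
      using Q by (cases "gagliardo_sq s (v n)") (auto simp: ennreal_le_iff top_unique)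
    have "N \<le> gn_const A p s d * Qn powr \<gamma>"
      unfolding \<gamma>_def d_def by (rule gagliardo_nirenberg_finite[OF v s p[unfolded d_def] A L2n N Qn(1,3)])
    also have "\<dots> \<le> gn_const A p s d * Q powr \<gamma>"
      using Qn \<gamma> by (intro mult_left_mono powr_mono2 gn_const_nonneg) auto
    finally show ?thesis using N by (simp add: ennreal_leI)
  qed
  have "(\<integral>\<^sup>+ x. ennreal (\<bar>u x\<bar> powr p) \<partial>lborel) = (SUP n. \<integral>\<^sup>+ x. ennreal (\<bar>v n x\<bar> powr p) \<partial>lborel)"
    unfolding v_def using p by (intro nn_integral_abs_powr_eq_SUP_clamp) auto
  also have "\<dots> \<le> ennreal (gn_const A p s d * Q powr \<gamma>)"
    by (rule SUP_least) (rule bound)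
  finally show ?thesis unfolding \<gamma>_def .
qed

section \<open>Tent functions\<close>

lemma nn_integral_lborel_translate:
  fixes f :: "'a::euclidean_space \<Rightarrow> ennreal"
  assumes [measurable]: "f \<in> borel_measurable borel"
  shows "(\<integral>\<^sup>+ y. f (y - x) \<partial>lborel) = (\<integral>\<^sup>+ h. f h \<partial>lborel)"
proof -
  have "(\<integral>\<^sup>+ h. f h \<partial>lborel) = (\<integral>\<^sup>+ h. f h \<partial>distr lborel borel ((+) (- x)))"
    by (simp add: lborel_distr_plus)
  also have "\<dots> = (\<integral>\<^sup>+ y. f (- x + y) \<partial>lborel)"
    by (subst nn_integral_distr) auto
  finally show ?thesis by simp
qed

lemma nn_integral_lborel_scale:
  fixes f :: "'a::euclidean_space \<Rightarrow> ennreal"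
  assumes [measurable]: "f \<in> borel_measurable borel" and R: "R > 0"
  shows "(\<integral>\<^sup>+ h. f h \<partial>lborel) = ennreal (R ^ DIM('a)) * (\<integral>\<^sup>+ h. f (R *\<^sub>R h) \<partial>lborel)"
proof -
  have "(\<integral>\<^sup>+ h. f h \<partial>lborel)
     = (\<integral>\<^sup>+ h. f h \<partial>density (distr lborel borel (\<lambda>x. 0 + R *\<^sub>R x)) (\<lambda>_. ennreal (\<bar>R\<bar> ^ DIM('a))))"
    using R by (subst lborel_affine[of R 0]) auto
  also have "\<dots> = (\<integral>\<^sup>+ h. ennreal (R ^ DIM('a)) * f (R *\<^sub>R h) \<partial>lborel)"
    using R by (simp add: nn_integral_density nn_integral_distr)
  also have "\<dots> = ennreal (R ^ DIM('a)) * (\<integral>\<^sup>+ h. f (R *\<^sub>R h) \<partial>lborel)"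
    by (rule nn_integral_cmult) measurable
  finally show ?thesis .
qed

lemma square_div_powr_le_dyadic:
  fixes r e :: real
  assumes r: "0 < r" "r \<le> 1" and e: "e > 0"
  obtains k :: nat where "r \<le> 2 powr (- real k)" "r\<^sup>2 / r powr e \<le> 2 powr (e + real k * (e - 2))"
proof (cases "r = 1")
  case True
  then show ?thesis using that[of 0] e ge_one_powr_ge_zero[of 2 e] by simp
next
  case False
  then have "1 / r > 1" using r by simp
  then obtain k :: nat where k: "2 ^ k < 1 / r" "1 / r \<le> 2 ^ (k + 1)"
    by (rule dyadic_bracket)
  have upper: "r \<le> 2 powr (- real k)"
    using k(1) r by (simp add: powr_minus powr_realpow field_simps)
  have dyadic: "2 powr (- real (k + 1)) = 1 / 2 ^ (k + 1)"
    by (simp only: powr_minus_divide powr_realpow[OF zero_less_numeral])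
  have lower: "2 powr (- real (k + 1)) \<le> r"
    unfolding dyadic using k(2) r by (simp add: field_simps)
  have "r\<^sup>2 / r powr e \<le> (2 powr (- real k))\<^sup>2 / (2 powr (- real (k + 1))) powr e"
    using upper lower r e by (intro frac_le power_mono powr_mono2) auto
  also have "(2 powr (- real k))\<^sup>2 = (2::real) powr (- 2 * real k)"
    by (simp add: power2_eq_square powr_add[symmetric])
  also have "(2 powr (- real (k + 1))) powr e = (2::real) powr (- real (k + 1) * e)"
    by (simp add: powr_powr)
  also have "2 powr (- 2 * real k) / 2 powr (- real (k + 1) * e) = (2::real) powr (e + real k * (e - 2))"
    by (simp add: powr_diff[symmetric] algebra_simps)
  finally show ?thesis using that upper by blast
qed

lemma inverse_powr_le_dyadic:
  fixes r e :: real
  assumes r: "1 < r" and e: "e > 0"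
  obtains k :: nat where "r \<le> 2 powr (real k + 1)" "1 / r powr e \<le> 2 powr (- real k * e)"
proof -
  obtain k :: nat where k: "2 ^ k < r" "r \<le> 2 ^ (k + 1)" using r by (rule dyadic_bracket)
  have "2 powr real k \<le> r" using k(1) by (simp add: powr_realpow)
  then have "1 / r powr e \<le> 1 / (2 powr real k) powr e"
    using e by (intro divide_left_mono powr_mono2 mult_pos_pos) auto
  also have "\<dots> = 2 powr (- real k * e)" by (simp add: powr_powr powr_minus_divide)
  finally have "1 / r powr e \<le> 2 powr (- real k * e)" .
  moreover have "r \<le> 2 powr (real k + 1)" using k(2) by (simp add: powr_realpow[symmetric] powr_add)
  ultimately show ?thesis by (rule that[rotated])
qed

lemma min_square_div_powr_le_dyadic_sums:
  fixes r e :: real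
  assumes r: "r \<ge> 0" and e: "e > 0"
  shows "ennreal (min (r\<^sup>2) 1 / r powr e)
    \<le> (\<Sum>k. ennreal (2 powr (e + real k * (e - 2))) * indicator {..2 powr (- real k)} r)
      + (\<Sum>k. ennreal (2 powr (- real k * e)) * indicator {..2 powr (real k + 1)} r)"
    (is "_ \<le> ?S1 + ?S2")
proof -
  consider "r = 0" | "0 < r" "r \<le> 1" | "1 < r" using r by linarith
  then show ?thesis
  proof cases
    case 2
    then obtain k :: nat where k: "r \<le> 2 powr (- real k)" "r\<^sup>2 / r powr e \<le> 2 powr (e + real k * (e - 2))"
      using e by (rule square_div_powr_le_dyadic)
    then have "ennreal (min (r\<^sup>2) 1 / r powr e) \<le> ennreal (2 powr (e + real k * (e - 2))) * indicator {..2 powr (- real k)} r"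
      using 2 by (simp add: ennreal_leI power_le_one)
    also have "\<dots> \<le> ?S1" by (rule ennreal_term_le_suminf)
    finally show ?thesis by (simp add: add_increasing2)
  next
    case 3
    then obtain k :: nat where k: "r \<le> 2 powr (real k + 1)" "1 / r powr e \<le> 2 powr (- real k * e)"
      using e by (rule inverse_powr_le_dyadic)
    have "1 \<le> r\<^sup>2" using 3 by (simp add: one_le_power)
    then have "ennreal (min (r\<^sup>2) 1 / r powr e) \<le> ennreal (2 powr (- real k * e)) * indicator {..2 powr (real k + 1)} r"
      using k by (simp add: ennreal_leI min_def)
    also have "\<dots> \<le> ?S2" by (rule ennreal_term_le_suminf)
    finally show ?thesis by (simp add: add_increasing)
  qed simp
qed

lemma emeasure_lborel_norm_le:
  assumes "\<rho> \<ge> 0"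
  shows "emeasure lborel {h::'a::euclidean_space. norm h \<le> \<rho>} = ennreal (unit_ball_vol DIM('a) * \<rho> ^ DIM('a))"
proof -
  have "{h::'a. norm h \<le> \<rho>} = cball 0 \<rho>" by auto
  then show ?thesis using emeasure_cball[OF assms, of "0::'a"] by simp
qed

lemma suminf_ennreal_powr_geometric_less_top:
  fixes C A B :: real
  assumes "C \<ge> 0" "B < 0"
  shows "(\<Sum>k. ennreal (C * 2 powr (A + real k * B))) < \<infinity>"
proof -
  have eq: "C * 2 powr (A + real k * B) = C * 2 powr A * (2 powr B) ^ k" for k
    by (simp add: powr_add powr_realpow[symmetric] powr_powr mult.commute)
  have "2 powr B < 1" using assms by (simp add: powr_less_one)
  then have "summable (\<lambda>k. C * 2 powr (A + real k * B))"
    unfolding eq by (intro summable_mult summable_geometric) simp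
  then have "(\<Sum>k. ennreal (C * 2 powr (A + real k * B))) \<noteq> top"
    by (rule ennreal_suminf_neq_top) (use assms in simp)
  then show ?thesis by (simp add: less_top)
qed

definition frac_kernel :: "real \<Rightarrow> real \<Rightarrow> real^'n \<Rightarrow> real" where
  "frac_kernel s R h = min ((norm h)\<^sup>2 / R\<^sup>2) 1 / norm h powr (real CARD('n) + 2 * s)"

lemma frac_kernel_measurable [measurable]: "frac_kernel s R \<in> borel_measurable borel"
  unfolding frac_kernel_def by measurable

lemma frac_kernel_minus: "frac_kernel s R (- h) = frac_kernel s R h"
  unfolding frac_kernel_def by simp

lemma nn_integral_frac_kernel_finite:
  assumes s: "0 < s" "s < 1"
  shows "(\<integral>\<^sup>+ (h::real^'n). ennreal (frac_kernel s 1 h) \<partial>lborel) < \<infinity>"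
proof -
  define d where "d = real CARD('n)"
  define e where "e = d + 2 * s"
  define \<omega> where "\<omega> = unit_ball_vol d"
  have \<omega>: "\<omega> \<ge> 0" unfolding \<omega>_def d_def by simp
  have ball: "ennreal (2 powr x) * emeasure lborel {h::real^'n. norm h \<le> 2 powr y}
      = ennreal (\<omega> * 2 powr (x + d * y))" for x y
    using emeasure_lborel_norm_le[of "2 powr y", where 'a="real^'n"] \<omega>
    by (simp add: \<omega>_def d_def ennreal_mult'[symmetric] powr_add powr_realpow[symmetric] powr_powr mult_ac)
  have ind: "(indicator {..\<rho>} (norm h) :: ennreal) = indicator {h::real^'n. norm h \<le> \<rho>} h" for \<rho> h
    by (simp add: indicator_def)
  have "(\<integral>\<^sup>+ (h::real^'n). ennreal (frac_kernel s 1 h) \<partial>lborel)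
      \<le> (\<integral>\<^sup>+ (h::real^'n). (\<Sum>k. ennreal (2 powr (e + real k * (e - 2))) * indicator {..2 powr (- real k)} (norm h))
            + (\<Sum>k. ennreal (2 powr (- real k * e)) * indicator {..2 powr (real k + 1)} (norm h)) \<partial>lborel)"
  proof (rule nn_integral_mono)
    fix h :: "real^'n"
    have "e > 0" unfolding e_def d_def using s by simp
    have "frac_kernel s 1 h = min ((norm h)\<^sup>2) 1 / norm h powr e"
      unfolding frac_kernel_def e_def d_def by simp
    then show "ennreal (frac_kernel s 1 h) \<le> (\<Sum>k. ennreal (2 powr (e + real k * (e - 2))) * indicator {..2 powr (- real k)} (norm h))
            + (\<Sum>k. ennreal (2 powr (- real k * e)) * indicator {..2 powr (real k + 1)} (norm h))"
      using min_square_div_powr_le_dyadic_sums[OF norm_ge_zero \<open>e > 0\<close>] by simp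
  qed
  also have "\<dots> = (\<Sum>k. ennreal (2 powr (e + real k * (e - 2))) * emeasure lborel {h::real^'n. norm h \<le> 2 powr (- real k)})
      + (\<Sum>k. ennreal (2 powr (- real k * e)) * emeasure lborel {h::real^'n. norm h \<le> 2 powr (real k + 1)})"
    unfolding ind by (subst nn_integral_add) (auto simp: nn_integral_suminf nn_integral_cmult_indicator)
  also have "\<dots> = (\<Sum>k. ennreal (\<omega> * 2 powr (e + real k * (2 * s - 2))))
      + (\<Sum>k. ennreal (\<omega> * 2 powr (d + real k * (- 2 * s))))"
    unfolding ball by (simp add: e_def algebra_simps)
  also have "\<dots> < \<infinity>"
    unfolding infinity_ennreal_def ennreal_add_less_top using s
    by (intro conjI suminf_ennreal_powr_geometric_less_top[OF \<omega>, unfolded infinity_ennreal_def]) simp_all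
  finally show ?thesis .
qed

lemma nn_integral_frac_kernel_scale:
  assumes R: "R > 0"
  shows "(\<integral>\<^sup>+ (h::real^'n). ennreal (frac_kernel s R h) \<partial>lborel)
    = ennreal (R powr (- 2 * s)) * (\<integral>\<^sup>+ (h::real^'n). ennreal (frac_kernel s 1 h) \<partial>lborel)"
proof -
  define e where "e = real CARD('n) + 2 * s"
  have scale: "frac_kernel s R (R *\<^sub>R h) = R powr (- e) * frac_kernel s 1 h" for h :: "real^'n"
  proof -
    have "(norm (R *\<^sub>R h))\<^sup>2 / R\<^sup>2 = (norm h)\<^sup>2" using R by (simp add: power_mult_distrib)
    moreover have "norm (R *\<^sub>R h) powr e = R powr e * norm h powr e" using R by (simp add: powr_mult)
    moreover have "m / (R powr e * n) = R powr (- e) * (m / n)" for m n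
      using R by (simp add: powr_minus divide_inverse mult_ac)
    ultimately show ?thesis unfolding frac_kernel_def e_def by simp
  qed
  have "(\<integral>\<^sup>+ (h::real^'n). ennreal (frac_kernel s R h) \<partial>lborel)
      = ennreal (R ^ CARD('n)) * (\<integral>\<^sup>+ (h::real^'n). ennreal (R powr (- e)) * ennreal (frac_kernel s 1 h) \<partial>lborel)"
    using nn_integral_lborel_scale[OF _ R, of "\<lambda>h::real^'n. ennreal (frac_kernel s R h)"]
    by (simp add: scale ennreal_mult')
  also have "\<dots> = ennreal (R ^ CARD('n) * R powr (- e)) * (\<integral>\<^sup>+ (h::real^'n). ennreal (frac_kernel s 1 h) \<partial>lborel)"
    using R by (simp add: nn_integral_cmult ennreal_mult' mult.assoc)
  also have "R ^ CARD('n) * R powr (- e) = R powr (- 2 * s)"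
    unfolding e_def using R by (simp add: powr_realpow[symmetric] powr_add[symmetric])
  finally show ?thesis .
qed

definition tent :: "real \<Rightarrow> 'a::real_normed_vector \<Rightarrow> real" where
  "tent R x = max 0 (1 - norm x / R)"

lemma tent_measurable [measurable]: "tent R \<in> borel_measurable borel"
  unfolding tent_def by measurable

lemma tent_bounds: "R > 0 \<Longrightarrow> 0 \<le> tent R x \<and> tent R x \<le> 1"
  unfolding tent_def by auto

lemma tent_eq_0: "R > 0 \<Longrightarrow> R < norm x \<Longrightarrow> tent R x = 0"
  unfolding tent_def by auto

lemma tent_ge_half: "R > 0 \<Longrightarrow> norm x \<le> R / 2 \<Longrightarrow> 1 / 2 \<le> tent R x"
  unfolding tent_def by (auto simp: field_simps)

lemma tent_diff_square_le:
  assumes R: "R > 0"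
  shows "(tent R x - tent R y)\<^sup>2 \<le> min ((norm (x - y))\<^sup>2 / R\<^sup>2) 1"
proof -
  have "\<bar>tent R x - tent R y\<bar> \<le> \<bar>(1 - norm x / R) - (1 - norm y / R)\<bar>"
    unfolding tent_def by (auto simp: max_def)
  also have "\<dots> = \<bar>norm y - norm x\<bar> / R"
    using R by (simp add: diff_divide_distrib[symmetric] abs_divide)
  also have "\<dots> \<le> norm (x - y) / R"
    using R by (intro divide_right_mono) (auto simp: norm_triangle_ineq3 abs_minus_commute)
  finally have "(tent R x - tent R y)\<^sup>2 \<le> (norm (x - y) / R)\<^sup>2"
    by (metis abs_ge_zero power2_abs power_mono)
  moreover have "(tent R x - tent R y)\<^sup>2 \<le> 1"
    using tent_bounds[OF R, of x] tent_bounds[OF R, of y] by (auto simp: abs_square_le_1 abs_le_iff)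
  ultimately show ?thesis by (simp add: power_divide)
qed

text \<open>The integrand vanishes unless \<open>x\<close> or \<open>y\<close> lies in \<open>cball 0 R\<close> and is bounded by the kernel
  at \<open>x - y\<close>, so each of the two strips contributes the volume of the ball times the kernel integral.\<close>
lemma gagliardo_sq_tent_le:
  fixes s R :: real
  assumes R: "R > 0"
  shows "gagliardo_sq s (tent R :: real^'n \<Rightarrow> real)
    \<le> 2 * emeasure lborel (cball (0::real^'n) R) * (\<integral>\<^sup>+ (h::real^'n). ennreal (frac_kernel s R h) \<partial>lborel)"
proof -
  define J where "J = (\<integral>\<^sup>+ (h::real^'n). ennreal (frac_kernel s R h) \<partial>lborel)"
  define B where "B = cball (0::real^'n) R"
  define f where "f x y = indicator B x * ennreal (frac_kernel s R (y - x))" for x y :: "real^'n"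
  have [measurable]: "B \<in> sets borel" unfolding B_def by simp
  have [measurable]: "case_prod f \<in> borel_measurable (lborel \<Otimes>\<^sub>M lborel)"
    unfolding f_def by measurable
  have [measurable]: "(\<lambda>z. f (snd z) (fst z)) \<in> borel_measurable (lborel \<Otimes>\<^sub>M lborel)"
    unfolding f_def by measurable
  have slice: "(\<integral>\<^sup>+ y. f x y \<partial>lborel) = indicator B x * J" for x
    unfolding f_def J_def
    by (simp add: nn_integral_cmult nn_integral_lborel_translate[of "\<lambda>h. ennreal (frac_kernel s R h)"])
  have pointwise: "ennreal ((tent R x - tent R y)\<^sup>2 / norm (x - y) powr (real CARD('n) + 2 * s))
      \<le> f x y + f y x" for x y :: "real^'n"
  proof -
    have "(tent R x - tent R y)\<^sup>2 / norm (x - y) powr (real CARD('n) + 2 * s) \<le> frac_kernel s R (x - y)"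
      unfolding frac_kernel_def by (intro divide_right_mono tent_diff_square_le R) simp
    moreover have "frac_kernel s R (y - x) = frac_kernel s R (x - y)"
      using frac_kernel_minus[of s R "x - y"] by simp
    moreover have "tent R x = 0 \<and> tent R y = 0" if "x \<notin> B" "y \<notin> B"
      using that tent_eq_0[OF R] unfolding B_def by (auto simp: not_le)
    ultimately show ?thesis unfolding f_def
      by (cases "x \<in> B"; cases "y \<in> B") (auto simp: ennreal_leI add_increasing add_increasing2)
  qed
  have "gagliardo_sq s (tent R :: real^'n \<Rightarrow> real) \<le> (\<integral>\<^sup>+ z. f (fst z) (snd z) + f (snd z) (fst z) \<partial>(lborel \<Otimes>\<^sub>M lborel))"
    unfolding gagliardo_sq_def by (rule nn_integral_mono) (rule pointwise)
  also have "\<dots> = (\<integral>\<^sup>+ z. f (fst z) (snd z) \<partial>(lborel \<Otimes>\<^sub>M lborel)) + (\<integral>\<^sup>+ z. f (snd z) (fst z) \<partial>(lborel \<Otimes>\<^sub>M lborel))"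
    by (rule nn_integral_add) measurable
  also have "\<dots> = (\<integral>\<^sup>+ x. \<integral>\<^sup>+ y. f x y \<partial>lborel \<partial>lborel) + (\<integral>\<^sup>+ y. \<integral>\<^sup>+ x. f y x \<partial>lborel \<partial>lborel)"
    using lborel.nn_integral_fst[of "case_prod f"] lborel_pair.nn_integral_snd[of "\<lambda>z. f (snd z) (fst z)"]
    by (simp add: case_prod_beta')
  also have "\<dots> = emeasure lborel B * J + emeasure lborel B * J"
  proof -
    have strip: "(\<integral>\<^sup>+ x. indicator B x * J \<partial>lborel) = emeasure lborel B * J"
      by (subst mult.commute) (simp add: nn_integral_cmult_indicator mult.commute)
    show ?thesis unfolding slice strip ..
  qed
  also have "\<dots> = 2 * emeasure lborel B * J"
    by (metis mult_2 distrib_right)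
  finally show ?thesis unfolding J_def B_def .
qed

lemma scaled_tent_gagliardo_bound:
  assumes s: "0 < s" "s < 1"
  obtains J where "J \<ge> 0" and "\<And>R c. R > 0 \<Longrightarrow> gagliardo_sq s (\<lambda>x::real^'n. c * tent R x)
      \<le> ennreal (c\<^sup>2 * (2 * unit_ball_vol (real CARD('n)) * R ^ CARD('n)) * R powr (- 2 * s) * J)"
proof
  define J where "J = enn2real (\<integral>\<^sup>+ (h::real^'n). ennreal (frac_kernel s 1 h) \<partial>lborel)"
  define \<omega> where "\<omega> = unit_ball_vol (real CARD('n))"
  show "J \<ge> 0" unfolding J_def by simp
  fix R c :: real assume R: "R > 0"
  have J: "(\<integral>\<^sup>+ (h::real^'n). ennreal (frac_kernel s 1 h) \<partial>lborel) = ennreal J"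
    unfolding J_def using nn_integral_frac_kernel_finite[OF s, where 'n='n] by (simp add: less_top)
  have "gagliardo_sq s (\<lambda>x::real^'n. c * tent R x) = ennreal (c\<^sup>2) * gagliardo_sq s (tent R :: real^'n \<Rightarrow> real)"
    by (rule gagliardo_sq_cmult) measurable
  also have "\<dots> \<le> ennreal (c\<^sup>2) * (2 * ennreal (\<omega> * R ^ CARD('n)) * (ennreal (R powr (- 2 * s)) * ennreal J))"
    using gagliardo_sq_tent_le[OF R, of s, where 'n='n] emeasure_cball[OF less_imp_le[OF R], of "0::real^'n"]
    by (intro mult_left_mono) (simp_all add: nn_integral_frac_kernel_scale[OF R] J \<omega>_def)
  also have "\<dots> = ennreal (c\<^sup>2 * (2 * \<omega> * R ^ CARD('n)) * R powr (- 2 * s) * J)"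
    using R \<open>J \<ge> 0\<close> unfolding \<omega>_def by (simp add: ennreal_mult ennreal_mult' mult.assoc)
  finally show "gagliardo_sq s (\<lambda>x::real^'n. c * tent R x)
      \<le> ennreal (c\<^sup>2 * (2 * unit_ball_vol (real CARD('n)) * R ^ CARD('n)) * R powr (- 2 * s) * J)"
    unfolding \<omega>_def .
qed

lemma tent_square_integral:
  fixes R :: real
  defines "I \<equiv> (\<integral>\<^sup>+ x. ennreal ((tent R x)\<^sup>2) \<partial>(lborel :: 'a::euclidean_space measure))"
  assumes R: "R > 0"
  shows "integrable lborel (\<lambda>x::'a. (tent R x)\<^sup>2)"
    and "unit_ball_vol DIM('a) * (R / 2) ^ DIM('a) / 4 \<le> (\<integral>x. (tent R x)\<^sup>2 \<partial>(lborel :: 'a measure))"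
proof -
  define \<omega> where "\<omega> = unit_ball_vol DIM('a)"
  have "I \<le> (\<integral>\<^sup>+ x. indicator (cball (0::'a) R) x \<partial>lborel)"
  proof (unfold I_def, rule nn_integral_mono)
    fix x :: 'a
    show "ennreal ((tent R x)\<^sup>2) \<le> indicator (cball 0 R) x"
      using tent_bounds[OF R, of x] tent_eq_0[OF R, of x] by (auto simp: indicator_def power_le_one not_le)
  qed
  also have "\<dots> = ennreal (\<omega> * R ^ DIM('a))"
    using emeasure_cball[of R "0::'a"] R unfolding \<omega>_def by simp
  finally have upper: "I < \<infinity>" by (simp add: order.strict_trans1)
  have "ennreal (\<omega> * (R / 2) ^ DIM('a) / 4) = (\<integral>\<^sup>+ x. ennreal (1 / 4) * indicator (cball (0::'a) (R / 2)) x \<partial>lborel)"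
    using emeasure_cball[of "R / 2" "0::'a"] R unfolding \<omega>_def
    by (simp add: nn_integral_cmult_indicator ennreal_mult'[symmetric])
  also have "\<dots> \<le> I"
  proof (unfold I_def, rule nn_integral_mono)
    fix x :: 'a
    have "norm x \<le> R / 2 \<Longrightarrow> (1 / 2)\<^sup>2 \<le> (tent R x)\<^sup>2"
      using tent_ge_half[OF R, of x] by (intro power_mono) auto
    then show "ennreal (1 / 4) * indicator (cball 0 (R / 2)) x \<le> ennreal ((tent R x)\<^sup>2)"
      by (auto simp: indicator_def power_divide ennreal_leI)
  qed
  finally have lower: "ennreal (\<omega> * (R / 2) ^ DIM('a) / 4) \<le> I" .
  show "integrable lborel (\<lambda>x::'a. (tent R x)\<^sup>2)"
    using upper unfolding I_def by (intro integrableI_bounded) auto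
  have "(\<integral>x. (tent R x)\<^sup>2 \<partial>(lborel :: 'a measure)) = enn2real I"
    unfolding I_def by (rule integral_eq_nn_integral) auto
  moreover have "\<omega> * (R / 2) ^ DIM('a) / 4 \<le> enn2real I"
    using enn2real_mono[OF lower] upper R unfolding \<omega>_def by (simp add: less_top)
  ultimately show "unit_ball_vol DIM('a) * (R / 2) ^ DIM('a) / 4 \<le> (\<integral>x. (tent R x)\<^sup>2 \<partial>(lborel :: 'a measure))"
    unfolding \<omega>_def by simp
qed

lemma normalized_tent:
  fixes R a :: real
  defines "n \<equiv> CARD('n)"
  assumes R: "R > 0" and a: "a > 0"
  obtains c where "integrable lborel (\<lambda>x::real^'n. (c * tent R x)\<^sup>2)"
    and "L2_norm_sq (\<lambda>x::real^'n. c * tent R x) = a"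
    and "c\<^sup>2 * (2 * unit_ball_vol (real n) * R ^ n) \<le> 8 * 2 ^ n * a"
proof
  define \<omega> where "\<omega> = unit_ball_vol (real n)"
  define L where "L = (\<integral>x. (tent R x)\<^sup>2 \<partial>(lborel :: (real^'n) measure))"
  define c where "c = sqrt (a / L)"
  have "\<omega> * (R / 2) ^ n / 4 \<le> L"
    using tent_square_integral(2)[OF R, where 'a="real^'n"] unfolding \<omega>_def n_def L_def by simp
  then have L: "\<omega> * R ^ n \<le> 4 * 2 ^ n * L"
    by (simp add: power_divide field_simps)
  moreover have "0 < \<omega> * R ^ n" using R unfolding \<omega>_def by simp
  ultimately have "0 < 4 * 2 ^ n * L" by linarith
  then have "L > 0" by (simp add: zero_less_mult_iff)
  then have c2: "c\<^sup>2 = a / L" unfolding c_def using a by simp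
  show "integrable lborel (\<lambda>x::real^'n. (c * tent R x)\<^sup>2)"
    using tent_square_integral(1)[OF R, where 'a="real^'n"] by (simp add: power_mult_distrib)
  show "L2_norm_sq (\<lambda>x::real^'n. c * tent R x) = a"
    unfolding L2_norm_sq_def using c2 \<open>L > 0\<close> by (simp add: power_mult_distrib L_def)
  have "c\<^sup>2 * (2 * \<omega> * R ^ n) \<le> a / L * (2 * (4 * 2 ^ n * L))"
    unfolding c2 using L \<open>L > 0\<close> a by (intro mult_left_mono) (auto simp: mult_ac)
  then show "c\<^sup>2 * (2 * unit_ball_vol (real n) * R ^ n) \<le> 8 * 2 ^ n * a"
    using \<open>L > 0\<close> unfolding \<omega>_def by simp
qed

lemma normalized_tent_seminorms_le:
  assumes s: "0 < s1" "s1 < s2" "s2 < 1" and a: "a > 0"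
  obtains M where "M \<ge> 0" and "\<And>R. R \<ge> 1 \<Longrightarrow> \<exists>u :: real^'n \<Rightarrow> real.
      u \<in> S_sphere s1 s2 a \<and> frac_grad_sq s1 u + frac_grad_sq s2 u \<le> M * R powr (- 2 * s1)"
proof -
  define n where "n = CARD('n)"
  define \<omega> where "\<omega> = unit_ball_vol (real n)"
  have s1: "0 < s1" "s1 < 1" and s2: "0 < s2" "s2 < 1" using s by auto
  obtain J1 where J1: "J1 \<ge> 0" "\<And>R c. R > 0 \<Longrightarrow> gagliardo_sq s1 (\<lambda>x::real^'n. c * tent R x)
      \<le> ennreal (c\<^sup>2 * (2 * \<omega> * R ^ n) * R powr (- 2 * s1) * J1)"
    using scaled_tent_gagliardo_bound[OF s1] unfolding \<omega>_def n_def by blast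
  obtain J2 where J2: "J2 \<ge> 0" "\<And>R c. R > 0 \<Longrightarrow> gagliardo_sq s2 (\<lambda>x::real^'n. c * tent R x)
      \<le> ennreal (c\<^sup>2 * (2 * \<omega> * R ^ n) * R powr (- 2 * s2) * J2)"
    using scaled_tent_gagliardo_bound[OF s2] unfolding \<omega>_def n_def by blast
  show ?thesis
  proof (rule that[of "8 * 2 ^ n * a * (J1 + J2)"])
    show "8 * 2 ^ n * a * (J1 + J2) \<ge> 0" using a J1 J2 by simp
    fix R :: real assume R1: "R \<ge> 1"
    then have R: "R > 0" by simp
    obtain c where int: "integrable lborel (\<lambda>x::real^'n. (c * tent R x)\<^sup>2)"
      and L2: "L2_norm_sq (\<lambda>x::real^'n. c * tent R x) = a"
      and c: "c\<^sup>2 * (2 * \<omega> * R ^ n) \<le> 8 * 2 ^ n * a"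
      using normalized_tent[OF R a, where 'n='n] unfolding \<omega>_def n_def by blast
    define u where "u = (\<lambda>x::real^'n. c * tent R x)"
    have finite: "gagliardo_sq s u < \<infinity>"
      and bound: "frac_grad_sq s u \<le> 8 * 2 ^ n * a * R powr (- 2 * s) * J"
      if "gagliardo_sq s u \<le> ennreal (c\<^sup>2 * (2 * \<omega> * R ^ n) * R powr (- 2 * s) * J)" "J \<ge> 0" for s J
    proof -
      show "gagliardo_sq s u < \<infinity>" using that(1) by (simp add: order.strict_trans1)
      have "frac_grad_sq s u \<le> c\<^sup>2 * (2 * \<omega> * R ^ n) * R powr (- 2 * s) * J"
        using that R unfolding frac_grad_sq_def \<omega>_def
        by (intro enn2real_leI) (auto intro!: mult_nonneg_nonneg)
      also have "\<dots> \<le> 8 * 2 ^ n * a * R powr (- 2 * s) * J"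
        using c that(2) by (intro mult_right_mono) auto
      finally show "frac_grad_sq s u \<le> 8 * 2 ^ n * a * R powr (- 2 * s) * J" .
    qed
    note J1' = J1(2)[OF R, of c, folded u_def] and J2' = J2(2)[OF R, of c, folded u_def]
    have "u \<in> S_sphere s1 s2 a"
      using finite[OF J1' J1(1)] finite[OF J2' J2(1)] int L2
      unfolding S_sphere_def H_space_def u_def by auto
    moreover have "frac_grad_sq s1 u + frac_grad_sq s2 u \<le> 8 * 2 ^ n * a * (J1 + J2) * R powr (- 2 * s1)"
    proof -
      have "R powr (- 2 * s2) \<le> R powr (- 2 * s1)" using R1 s by (intro powr_mono) auto
      then have "8 * 2 ^ n * a * R powr (- 2 * s2) * J2 \<le> 8 * 2 ^ n * a * R powr (- 2 * s1) * J2"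
        using a J2(1) by (intro mult_right_mono mult_left_mono) auto
      then show ?thesis using bound[OF J1' J1(1)] bound[OF J2' J2(1)] by (simp add: algebra_simps)
    qed
    ultimately show "\<exists>u :: real^'n \<Rightarrow> real.
      u \<in> S_sphere s1 s2 a \<and> frac_grad_sq s1 u + frac_grad_sq s2 u \<le> 8 * 2 ^ n * a * (J1 + J2) * R powr (- 2 * s1)"
      by blast
  qed
qed

lemma exists_S_sphere_small_seminorms:
  assumes s: "0 < s1" "s1 < s2" "s2 < 1" and a: "a > 0" and \<epsilon>: "\<epsilon> > 0"
  shows "\<exists>u :: real^'n \<Rightarrow> real. u \<in> S_sphere s1 s2 a \<and> frac_grad_sq s1 u + frac_grad_sq s2 u \<le> \<epsilon>"
proof -
  obtain M where M: "M \<ge> 0" and small: "\<And>R. R \<ge> 1 \<Longrightarrow> \<exists>u :: real^'n \<Rightarrow> real.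
      u \<in> S_sphere s1 s2 a \<and> frac_grad_sq s1 u + frac_grad_sq s2 u \<le> M * R powr (- 2 * s1)"
    using normalized_tent_seminorms_le[OF s a] by blast
  define R where "R = max 1 ((M / \<epsilon>) powr (1 / (2 * s1)))"
  have "M * R powr (- 2 * s1) \<le> \<epsilon>"
  proof (cases "M = 0")
    case False
    have "(M / \<epsilon>) powr (1 / (2 * s1)) \<le> R" unfolding R_def by simp
    then have "((M / \<epsilon>) powr (1 / (2 * s1))) powr (2 * s1) \<le> R powr (2 * s1)"
      using s by (intro powr_mono2) auto
    then have "M / \<epsilon> \<le> R powr (2 * s1)" using s M False \<epsilon> by (simp add: powr_powr)
    then have "M \<le> \<epsilon> * R powr (2 * s1)" using \<epsilon> by (simp add: field_simps)
    moreover have "M * R powr (- 2 * s1) = M / R powr (2 * s1)" by (simp add: powr_minus divide_inverse)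
    moreover have "R powr (2 * s1) > 0" unfolding R_def by simp
    ultimately show ?thesis by (simp add: pos_divide_le_eq)
  qed (use \<epsilon> in simp)
  moreover obtain u :: "real^'n \<Rightarrow> real" where
    "u \<in> S_sphere s1 s2 a" "frac_grad_sq s1 u + frac_grad_sq s2 u \<le> M * R powr (- 2 * s1)"
    using small[of R] unfolding R_def by auto
  ultimately show ?thesis by force
qed

section \<open>The primitive of the nonlinearity\<close>

lemma has_real_derivative_primitive:
  assumes "continuous_on UNIV g"
  shows "(primitive g has_real_derivative g x) (at x)"
proof -
  have "((\<lambda>u. LBINT y=ereal 0..u. g y) has_vector_derivative g x) (at x within {- \<bar>x\<bar> - 1..\<bar>x\<bar> + 1})"
    by (rule interval_integral_FTC2) (auto intro: continuous_on_subset[OF assms])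
  moreover have "at x within {- \<bar>x\<bar> - 1..\<bar>x\<bar> + 1} = at x"
    by (rule at_within_Icc_at) auto
  ultimately show ?thesis unfolding primitive_def zero_ereal_def
    by (simp add: has_real_derivative_iff_has_vector_derivative del: ereal_eq_0)
qed

lemma continuous_on_primitive: "continuous_on UNIV g \<Longrightarrow> continuous_on S (primitive g)"
  by (meson DERIV_isCont continuous_at_imp_continuous_on has_real_derivative_primitive)

lemma primitive_zero [simp]: "primitive g 0 = 0"
  unfolding primitive_def zero_ereal_def by (rule interval_integral_endpoints_same)

lemma primitive_even:
  assumes cont: "continuous_on UNIV g" and odd: "\<And>t. g (- t) = - g t"
  shows "primitive g (- t) = primitive g t"
proof -
  have "((\<lambda>x. primitive g (- x) - primitive g x) has_real_derivative g (- x) * (- 1) - g x) (at x)" for x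
    by (intro DERIV_diff DERIV_chain2[OF has_real_derivative_primitive[OF cont]]
        has_real_derivative_primitive[OF cont] DERIV_minus DERIV_ident)
  then have "((\<lambda>x. primitive g (- x) - primitive g x) has_real_derivative 0) (at x)" for x
    using odd by simp
  then have "primitive g (- t) - primitive g t = primitive g (- 0) - primitive g 0"
    by (intro DERIV_isconst_all) auto
  then show ?thesis by simp
qed

lemma powr_quotient_mono_of_growth:
  fixes G g :: "real \<Rightarrow> real"
  assumes deriv: "\<And>x. x > 0 \<Longrightarrow> (G has_real_derivative g x) (at x)"
    and growth: "\<And>x. x > 0 \<Longrightarrow> \<gamma> * G x \<le> g x * x"
    and st: "0 < s" "s \<le> t"
  shows "G s * t powr \<gamma> \<le> G t * s powr \<gamma>"
proof -
  define h where "h x = G x * x powr (- \<gamma>)" for x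
  have dh: "(h has_real_derivative x powr (- \<gamma> - 1) * (g x * x - \<gamma> * G x)) (at x)" if "x > 0" for x
  proof -
    have "x powr (- \<gamma>) = x powr (- \<gamma> - 1) * x"
      using that by (simp add: powr_diff)
    then have "g x * x powr (- \<gamma>) + - \<gamma> * x powr (- \<gamma> - 1) * G x = x powr (- \<gamma> - 1) * (g x * x - \<gamma> * G x)"
      by (simp add: algebra_simps)
    then show ?thesis unfolding h_def
      using DERIV_mult[OF deriv[OF that] has_real_derivative_powr[OF that, of "- \<gamma>"]] by simp
  qed
  have "h s \<le> h t"
  proof (rule DERIV_nonneg_imp_increasing_open[OF st(2)])
    fix x assume "s < x" "x < t"
    then have "x > 0" using st by simp
    then show "\<exists>y. (h has_real_derivative y) (at x) \<and> 0 \<le> y"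
      using dh growth[of x] by fastforce
  next
    show "continuous_on {s..t} h"
      using st by (intro continuous_at_imp_continuous_on ballI DERIV_isCont[OF dh]) auto
  qed
  then have "G s * s powr (- \<gamma>) * (s powr \<gamma> * t powr \<gamma>) \<le> G t * t powr (- \<gamma>) * (s powr \<gamma> * t powr \<gamma>)"
    unfolding h_def by (intro mult_right_mono) auto
  then show ?thesis using st by (simp add: powr_minus field_simps)
qed

lemma primitive_le_powr_sum:
  fixes g :: "real \<Rightarrow> real"
  assumes cont: "continuous_on UNIV g" and odd: "\<And>t. g (- t) = - g t" and "\<alpha> < \<beta>"
    and growth: "\<And>t. \<alpha> * primitive g t \<le> g t * t \<and> g t * t \<le> \<beta> * primitive g t"
  shows "0 \<le> primitive g t" and "primitive g t \<le> primitive g 1 * (\<bar>t\<bar> powr \<alpha> + \<bar>t\<bar> powr \<beta>)"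
proof -
  define G where "G = primitive g"
  have lower: "\<alpha> * G x \<le> g x * x" and upper: "g x * x \<le> \<beta> * G x" for x
    using growth unfolding G_def by auto
  have nonneg: "0 \<le> G x" for x
  proof -
    have "0 \<le> (\<beta> - \<alpha>) * G x" using lower[of x] upper[of x] by (simp add: algebra_simps)
    then show ?thesis using \<open>\<alpha> < \<beta>\<close> by (simp add: zero_le_mult_iff)
  qed
  then show "0 \<le> primitive g t" unfolding G_def .
  have deriv: "(G has_real_derivative g x) (at x)" for x
    unfolding G_def by (rule has_real_derivative_primitive[OF cont])
  have pos: "G x \<le> G 1 * (x powr \<alpha> + x powr \<beta>)" if "x > 0" for x
  proof (cases "x \<le> 1")
    case True
    have "G x * 1 powr \<alpha> \<le> G 1 * x powr \<alpha>"
      by (rule powr_quotient_mono_of_growth[OF deriv lower that True])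
    then show ?thesis using nonneg[of 1] by (simp add: add_increasing2 distrib_left)
  next
    case False
    have "- G 1 * x powr \<beta> \<le> - G x * 1 powr \<beta>"
      by (rule powr_quotient_mono_of_growth[of "\<lambda>x. - G x" "\<lambda>x. - g x", OF DERIV_minus[OF deriv]])
         (use upper False in auto)
    then show ?thesis using nonneg[of 1] that by (simp add: distrib_left add_increasing)
  qed
  have "G t \<le> G 1 * (\<bar>t\<bar> powr \<alpha> + \<bar>t\<bar> powr \<beta>)"
  proof (cases t "0::real" rule: linorder_cases)
    case less
    then show ?thesis using pos[of "- t"] primitive_even[OF cont odd, of "- t"] by (simp add: G_def)
  qed (use pos nonneg[of 1] in \<open>simp_all add: G_def\<close>)
  then show "primitive g t \<le> primitive g 1 * (\<bar>t\<bar> powr \<alpha> + \<bar>t\<bar> powr \<beta>)" unfolding G_def .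
qed

lemma integral_le_of_powr_bound:
  fixes u :: "'a \<Rightarrow> real" and G :: "real \<Rightarrow> real"
  assumes [measurable]: "u \<in> borel_measurable M" and G: "continuous_on UNIV G"
    and G_nonneg: "\<And>t. G t \<ge> 0" and C: "C \<ge> 0"
    and G_le: "\<And>t. G t \<le> C * (\<bar>t\<bar> powr \<alpha> + \<bar>t\<bar> powr \<beta>)"
    and Xa: "(\<integral>\<^sup>+ x. ennreal (\<bar>u x\<bar> powr \<alpha>) \<partial>M) \<le> ennreal Xa" "Xa \<ge> 0"
    and Xb: "(\<integral>\<^sup>+ x. ennreal (\<bar>u x\<bar> powr \<beta>) \<partial>M) \<le> ennreal Xb" "Xb \<ge> 0"
  shows "(\<integral>x. G (u x) \<partial>M) \<le> C * (Xa + Xb)"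
proof -
  have [measurable]: "G \<in> borel_measurable borel" using G by (rule borel_measurable_continuous_onI)
  have "(\<integral>\<^sup>+ x. ennreal (G (u x)) \<partial>M)
      \<le> (\<integral>\<^sup>+ x. ennreal C * (ennreal (\<bar>u x\<bar> powr \<alpha>) + ennreal (\<bar>u x\<bar> powr \<beta>)) \<partial>M)"
    using G_le C by (intro nn_integral_mono) (simp add: ennreal_leI flip: ennreal_mult ennreal_plus)
  also have "\<dots> = ennreal C * ((\<integral>\<^sup>+ x. ennreal (\<bar>u x\<bar> powr \<alpha>) \<partial>M) + (\<integral>\<^sup>+ x. ennreal (\<bar>u x\<bar> powr \<beta>) \<partial>M))"
    by (simp add: nn_integral_cmult nn_integral_add)
  also have "\<dots> \<le> ennreal C * (ennreal Xa + ennreal Xb)"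
    by (intro mult_left_mono add_mono Xa(1) Xb(1)) auto
  also have "\<dots> = ennreal (C * (Xa + Xb))"
    using Xa(2) Xb(2) C by (simp add: ennreal_mult)
  finally have "(\<integral>\<^sup>+ x. ennreal (G (u x)) \<partial>M) \<le> ennreal (C * (Xa + Xb))" .
  then have "enn2real (\<integral>\<^sup>+ x. ennreal (G (u x)) \<partial>M) \<le> C * (Xa + Xb)"
    using C Xa Xb by (intro enn2real_leI) auto
  then show ?thesis by (simp add: integral_eq_nn_integral G_nonneg)
qed

section \<open>The energy on the sphere\<close>

lemma S_sphereD:
  assumes "u \<in> S_sphere s1 s2 a"
  shows "u \<in> borel_measurable lborel" and "(\<integral>\<^sup>+ x. ennreal ((u x)\<^sup>2) \<partial>lborel) = ennreal a"
    and "gagliardo_sq s1 u = ennreal (frac_grad_sq s1 u)"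
proof -
  from assms have int: "integrable lborel (\<lambda>x. (u x)\<^sup>2)" and L2: "L2_norm_sq u = a"
    and fin: "gagliardo_sq s1 u < \<infinity>"
    unfolding S_sphere_def H_space_def by auto
  show "u \<in> borel_measurable lborel" using assms unfolding S_sphere_def H_space_def by auto
  show "(\<integral>\<^sup>+ x. ennreal ((u x)\<^sup>2) \<partial>lborel) = ennreal a"
    using nn_integral_eq_integral[OF int] L2 unfolding L2_norm_sq_def by simp
  show "gagliardo_sq s1 u = ennreal (frac_grad_sq s1 u)"
    unfolding frac_grad_sq_def using fin by (simp add: less_top)
qed

lemma gagliardo_nirenberg_S_sphere:
  fixes u :: "real^'n \<Rightarrow> real"
  defines "d \<equiv> real CARD('n)"
  assumes u: "u \<in> S_sphere s1 s2 a" and s1: "s1 > 0" and a: "a \<ge> 0"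
    and p: "p > 2" "p < 2 + 2 * s1 / d * p"
  shows "(\<integral>\<^sup>+ x. ennreal (\<bar>u x\<bar> powr p) \<partial>lborel)
    \<le> ennreal (gn_const a p s1 d * frac_grad_sq s1 u powr ((p - 2) * d / (4 * s1)))"
  unfolding d_def
  by (rule gagliardo_nirenberg[OF S_sphereD(1)[OF u] s1 p[unfolded d_def] a
        eq_refl[OF S_sphereD(2)[OF u]] _ S_sphereD(3)[OF u]])
     (simp add: frac_grad_sq_def)

lemma frac_grad_sq_pos_S_sphere:
  fixes u :: "real^'n \<Rightarrow> real"
  assumes u: "u \<in> S_sphere s1 s2 a" and s1: "s1 > 0" and a: "a > 0"
    and p: "p > 2" "p < 2 + 2 * s1 / real CARD('n) * p"
  shows "frac_grad_sq s1 u > 0"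
proof (rule ccontr)
  assume "\<not> frac_grad_sq s1 u > 0"
  then have "frac_grad_sq s1 u = 0"
    using enn2real_nonneg[of "gagliardo_sq s1 u"] unfolding frac_grad_sq_def by linarith
  moreover have "(p - 2) * real CARD('n) / (4 * s1) > 0" using p s1 by simp
  ultimately have "(\<integral>\<^sup>+ x. ennreal (\<bar>u x\<bar> powr p) \<partial>lborel) = 0"
    using gagliardo_nirenberg_S_sphere[OF u s1 _ p] a by simp
  then have "AE x in lborel. u x = 0"
    using S_sphereD(1)[OF u] by (subst (asm) nn_integral_0_iff_AE) auto
  moreover have "(\<lambda>x. ennreal ((u x)\<^sup>2)) \<in> borel_measurable lborel"
    using S_sphereD(1)[OF u] by measurable
  ultimately have "(\<integral>\<^sup>+ x. ennreal ((u x)\<^sup>2) \<partial>lborel) = 0"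
    by (subst nn_integral_0_iff_AE) (auto elim: AE_mp)
  then show False using S_sphereD(2)[OF u] a by simp
qed

lemma subcritical_exponent:
  fixes p s d :: real
  assumes "0 < s" "2 * s < d" "p < 2 * d / (d - 2 * s)"
  shows "p < 2 + 2 * s / d * p"
  using assms by (simp add: field_simps)

lemma integral_primitive_le_S_sphere:
  fixes g :: "real \<Rightarrow> real"
  defines "d \<equiv> real CARD('n)"
  assumes s1: "0 < s1" "2 * s1 < d" and a: "a > 0"
    and g: "continuous_on UNIV g" "\<And>t. g (- t) = - g t"
    and \<alpha>\<beta>: "2 + 4 * s1 / d < \<alpha>" "\<alpha> < \<beta>" "\<beta> < 2 * d / (d - 2 * s1)"
    and growth: "\<And>t. \<alpha> * primitive g t \<le> g t * t \<and> g t * t \<le> \<beta> * primitive g t"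
  obtains C \<gamma> \<gamma>' where "C \<ge> 0" "1 < \<gamma>" "\<gamma> \<le> \<gamma>'"
    and "\<And>u :: real^'n \<Rightarrow> real. u \<in> S_sphere s1 s2 a \<Longrightarrow>
      (\<integral>x. primitive g (u x) \<partial>lborel) \<le> C * (frac_grad_sq s1 u powr \<gamma> + frac_grad_sq s1 u powr \<gamma>')"
proof
  define G where "G = primitive g"
  define C\<alpha> where "C\<alpha> = gn_const a \<alpha> s1 d"
  define C\<beta> where "C\<beta> = gn_const a \<beta> s1 d"
  have d: "d > 0" unfolding d_def by simp
  have "4 * s1 / d > 0" using s1 d by simp
  then have \<alpha>2: "\<alpha> > 2" and \<beta>2: "\<beta> > 2" using \<alpha>\<beta> by linarith+
  have G_nonneg: "\<And>t. 0 \<le> G t" and G_le: "\<And>t. G t \<le> G 1 * (\<bar>t\<bar> powr \<alpha> + \<bar>t\<bar> powr \<beta>)"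
    unfolding G_def using primitive_le_powr_sum[OF g \<alpha>\<beta>(2) growth] by auto
  show "G 1 * max C\<alpha> C\<beta> \<ge> 0"
    using G_nonneg[of 1] gn_const_nonneg unfolding C\<alpha>_def C\<beta>_def
    by (intro mult_nonneg_nonneg) (auto simp: le_max_iff_disj)
  show "1 < (\<alpha> - 2) * d / (4 * s1)" using \<alpha>\<beta>(1) s1 d by (simp add: field_simps)
  show "(\<alpha> - 2) * d / (4 * s1) \<le> (\<beta> - 2) * d / (4 * s1)" using \<alpha>\<beta>(2) s1 d by (simp add: field_simps)
  fix u :: "real^'n \<Rightarrow> real"
  assume u: "u \<in> S_sphere s1 s2 a"
  define F1 where "F1 = frac_grad_sq s1 u"
  have "(\<integral>\<^sup>+ x. ennreal (\<bar>u x\<bar> powr \<alpha>) \<partial>lborel) \<le> ennreal (C\<alpha> * F1 powr ((\<alpha> - 2) * d / (4 * s1)))"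
    unfolding C\<alpha>_def F1_def d_def using \<alpha>2 \<alpha>\<beta> a s1
    by (intro gagliardo_nirenberg_S_sphere[OF u s1(1)] subcritical_exponent) (auto simp: d_def)
  moreover have "(\<integral>\<^sup>+ x. ennreal (\<bar>u x\<bar> powr \<beta>) \<partial>lborel) \<le> ennreal (C\<beta> * F1 powr ((\<beta> - 2) * d / (4 * s1)))"
    unfolding C\<beta>_def F1_def d_def using \<beta>2 \<alpha>\<beta> a s1
    by (intro gagliardo_nirenberg_S_sphere[OF u s1(1)] subcritical_exponent) (auto simp: d_def)
  ultimately have "(\<integral>x. G (u x) \<partial>lborel)
      \<le> G 1 * (C\<alpha> * F1 powr ((\<alpha> - 2) * d / (4 * s1)) + C\<beta> * F1 powr ((\<beta> - 2) * d / (4 * s1)))"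
    using S_sphereD(1)[OF u] continuous_on_primitive[OF g(1)] G_nonneg G_le gn_const_nonneg
    unfolding G_def C\<alpha>_def C\<beta>_def by (intro integral_le_of_powr_bound) auto
  also have "\<dots> \<le> G 1 * max C\<alpha> C\<beta> * (F1 powr ((\<alpha> - 2) * d / (4 * s1)) + F1 powr ((\<beta> - 2) * d / (4 * s1)))"
    using G_nonneg[of 1] by (simp add: distrib_left mult.assoc add_mono mult_left_mono mult_right_mono)
  finally show "(\<integral>x. primitive g (u x) \<partial>lborel) \<le> G 1 * max C\<alpha> C\<beta> *
      (frac_grad_sq s1 u powr ((\<alpha> - 2) * d / (4 * s1)) + frac_grad_sq s1 u powr ((\<beta> - 2) * d / (4 * s1)))"
    unfolding G_def F1_def .
qed

lemma powr_sum_le_linear_near_zero: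
  fixes C \<gamma> \<gamma>' :: real
  assumes C: "C \<ge> 0" and \<gamma>: "1 < \<gamma>" "\<gamma> \<le> \<gamma>'"
  obtains K where "K > 0" and "\<And>x. 0 \<le> x \<Longrightarrow> x \<le> 2 * K \<Longrightarrow> C * (x powr \<gamma> + x powr \<gamma>') \<le> x / 8"
proof
  define e where "e = \<gamma> - 1"
  define K where "K = min 1 ((1 / (16 * (C + 1))) powr (1 / e)) / 2"
  have e: "e > 0" unfolding e_def using \<gamma> by simp
  show "K > 0" unfolding K_def using C by simp
  fix x :: real assume x: "0 \<le> x" "x \<le> 2 * K"
  show "C * (x powr \<gamma> + x powr \<gamma>') \<le> x / 8"
  proof (cases "x = 0")
    case False
    then have x0: "x > 0" using x by simp
    have x1: "x \<le> 1" using x unfolding K_def by simp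
    have "x powr e \<le> ((1 / (16 * (C + 1))) powr (1 / e)) powr e"
      using x e C unfolding K_def by (intro powr_mono2) auto
    then have small: "x powr e \<le> 1 / (16 * (C + 1))" using e C by (simp add: powr_powr)
    have "x powr \<gamma>' \<le> x powr \<gamma>" using \<gamma> x0 x1 by (intro powr_mono') auto
    then have "C * (x powr \<gamma> + x powr \<gamma>') \<le> C * (2 * x * x powr e)"
      using x0 C unfolding e_def by (intro mult_left_mono) (auto simp: powr_diff)
    also have "\<dots> \<le> (C + 1) * (2 * x * (1 / (16 * (C + 1))))"
      using small C x0 by (intro mult_mono) auto
    also have "\<dots> = x / 8" using C by (simp add: field_simps)
    finally show ?thesis .
  qed (use \<gamma> in simp)
qed

lemma energy_bounds_S_sphere:
  fixes g :: "real \<Rightarrow> real"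
  defines "d \<equiv> real CARD('n)"
  assumes s1: "0 < s1" "2 * s1 < d" and a: "a > 0"
    and g: "continuous_on UNIV g" "\<And>t. g (- t) = - g t"
    and \<alpha>\<beta>: "2 + 4 * s1 / d < \<alpha>" "\<alpha> < \<beta>" "\<beta> < 2 * d / (d - 2 * s1)"
    and growth: "\<And>t. \<alpha> * primitive g t \<le> g t * t \<and> g t * t \<le> \<beta> * primitive g t"
  obtains K where "K > 0"
    and "\<And>u :: real^'n \<Rightarrow> real. u \<in> S_sphere s1 s2 a \<Longrightarrow> 0 < frac_grad_sq s1 u"
    and "\<And>u :: real^'n \<Rightarrow> real. u \<in> S_sphere s1 s2 a \<Longrightarrow>
      2 * energy s1 s2 g u \<le> frac_grad_sq s1 u + frac_grad_sq s2 u"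
    and "\<And>u :: real^'n \<Rightarrow> real. u \<in> S_sphere s1 s2 a \<Longrightarrow> frac_grad_sq s1 u + frac_grad_sq s2 u \<le> 2 * K \<Longrightarrow>
      3 * frac_grad_sq s1 u + 4 * frac_grad_sq s2 u \<le> 8 * energy s1 s2 g u"
proof -
  obtain C \<gamma> \<gamma>' where C: "C \<ge> 0" "1 < \<gamma>" "\<gamma> \<le> \<gamma>'" and G_le: "\<And>u :: real^'n \<Rightarrow> real.
      u \<in> S_sphere s1 s2 a \<Longrightarrow>
      (\<integral>x. primitive g (u x) \<partial>lborel) \<le> C * (frac_grad_sq s1 u powr \<gamma> + frac_grad_sq s1 u powr \<gamma>')"
    using integral_primitive_le_S_sphere[where ?s2.0=s2, OF s1[unfolded d_def] a g \<alpha>\<beta>[unfolded d_def] growth] by blast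
  obtain K where K: "K > 0"
    and small: "\<And>x. 0 \<le> x \<Longrightarrow> x \<le> 2 * K \<Longrightarrow> C * (x powr \<gamma> + x powr \<gamma>') \<le> x / 8"
    using powr_sum_le_linear_near_zero[OF C] by blast
  have "4 * s1 / d > 0" using s1 unfolding d_def by simp
  then have \<alpha>2: "\<alpha> > 2" using \<alpha>\<beta>(1) by linarith
  have \<alpha>_sub: "\<alpha> < 2 + 2 * s1 / real CARD('n) * \<alpha>"
    using subcritical_exponent[OF s1] \<alpha>\<beta> unfolding d_def by simp
  have G_nonneg: "0 \<le> (\<integral>x. primitive g (u x) \<partial>lborel)" for u :: "real^'n \<Rightarrow> real"
    using primitive_le_powr_sum(1)[OF g \<alpha>\<beta>(2) growth] by (simp add: integral_nonneg)
  show ?thesis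
  proof (rule that)
    show "K > 0" by (rule K)
    fix u :: "real^'n \<Rightarrow> real"
    assume u: "u \<in> S_sphere s1 s2 a"
    show "0 < frac_grad_sq s1 u" by (rule frac_grad_sq_pos_S_sphere[OF u s1(1) a \<alpha>2 \<alpha>_sub])
    show "2 * energy s1 s2 g u \<le> frac_grad_sq s1 u + frac_grad_sq s2 u"
      using G_nonneg[of u] unfolding energy_def by simp
    assume "frac_grad_sq s1 u + frac_grad_sq s2 u \<le> 2 * K"
    then have "frac_grad_sq s1 u \<le> 2 * K" using frac_grad_sq_nonneg[of s2 u] by linarith
    then have "C * (frac_grad_sq s1 u powr \<gamma> + frac_grad_sq s1 u powr \<gamma>') \<le> frac_grad_sq s1 u / 8"
      by (intro small) simp_all
    then show "3 * frac_grad_sq s1 u + 4 * frac_grad_sq s2 u \<le> 8 * energy s1 s2 g u"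
      using G_le[OF u] unfolding energy_def by (simp add: field_simps)
  qed
qed

lemma energy_mountain_pass_geometry:
  fixes g :: "real \<Rightarrow> real"
  defines "d \<equiv> real CARD('n)"
  assumes s1: "0 < s1" "2 * s1 < d" and a: "a > 0"
    and g: "continuous_on UNIV g" "\<And>t. g (- t) = - g t"
    and \<alpha>\<beta>: "2 + 4 * s1 / d < \<alpha>" "\<alpha> < \<beta>" "\<beta> < 2 * d / (d - 2 * s1)"
    and growth: "\<And>t. \<alpha> * primitive g t \<le> g t * t \<and> g t * t \<le> \<beta> * primitive g t"
  obtains K where "K > 0"
    and "\<And>u :: real^'n \<Rightarrow> real. u \<in> S_sphere s1 s2 a \<Longrightarrow> frac_grad_sq s1 u + frac_grad_sq s2 u \<le> K \<Longrightarrow>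
      0 < energy s1 s2 g u \<and> energy s1 s2 g u \<le> K / 2"
    and "\<And>u :: real^'n \<Rightarrow> real. u \<in> S_sphere s1 s2 a \<Longrightarrow> frac_grad_sq s1 u + frac_grad_sq s2 u = 2 * K \<Longrightarrow>
      3 * K / 4 \<le> energy s1 s2 g u"
proof -
  obtain K where K: "K > 0"
    and pos: "\<And>u :: real^'n \<Rightarrow> real. u \<in> S_sphere s1 s2 a \<Longrightarrow> 0 < frac_grad_sq s1 u"
    and upper: "\<And>u :: real^'n \<Rightarrow> real. u \<in> S_sphere s1 s2 a \<Longrightarrow>
      2 * energy s1 s2 g u \<le> frac_grad_sq s1 u + frac_grad_sq s2 u"
    and lower: "\<And>u :: real^'n \<Rightarrow> real. u \<in> S_sphere s1 s2 a \<Longrightarrow> frac_grad_sq s1 u + frac_grad_sq s2 u \<le> 2 * K \<Longrightarrow>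
      3 * frac_grad_sq s1 u + 4 * frac_grad_sq s2 u \<le> 8 * energy s1 s2 g u"
    using energy_bounds_S_sphere[OF s1[unfolded d_def] a g \<alpha>\<beta>[unfolded d_def] growth] by blast
  show ?thesis
  proof (rule that[OF K])
    fix u :: "real^'n \<Rightarrow> real"
    assume u: "u \<in> S_sphere s1 s2 a"
    assume small: "frac_grad_sq s1 u + frac_grad_sq s2 u \<le> K"
    then have "3 * frac_grad_sq s1 u + 4 * frac_grad_sq s2 u \<le> 8 * energy s1 s2 g u"
      using lower[OF u] K by simp
    then have "0 < energy s1 s2 g u" using pos[OF u] frac_grad_sq_nonneg[of s2 u] by linarith
    moreover have "energy s1 s2 g u \<le> K / 2" using upper[OF u] small by simp
    ultimately show "0 < energy s1 s2 g u \<and> energy s1 s2 g u \<le> K / 2" ..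
  next
    fix u :: "real^'n \<Rightarrow> real"
    assume u: "u \<in> S_sphere s1 s2 a"
    assume "frac_grad_sq s1 u + frac_grad_sq s2 u = 2 * K"
    then have "6 * K + frac_grad_sq s2 u \<le> 8 * energy s1 s2 g u"
      using lower[OF u] by simp
    then show "3 * K / 4 \<le> energy s1 s2 g u" using frac_grad_sq_nonneg[of s2 u] by linarith
  qed
qed

lemma ereal_SUP_lt_INF_of_bounds:
  fixes E :: "'a \<Rightarrow> real"
  assumes "x \<in> A" "0 < E x" and "\<And>u. u \<in> A \<Longrightarrow> E u \<le> b" and "\<And>u. u \<in> B \<Longrightarrow> c \<le> E u" and "b < c"
  shows "0 < (SUP u\<in>A. ereal (E u))" and "(SUP u\<in>A. ereal (E u)) < (INF u\<in>B. ereal (E u))"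
proof -
  have "(0::ereal) < ereal (E x)" using assms(2) by simp
  also have "\<dots> \<le> (SUP u\<in>A. ereal (E u))" using assms(1) by (rule SUP_upper)
  finally show "0 < (SUP u\<in>A. ereal (E u))" .
  have "(SUP u\<in>A. ereal (E u)) \<le> ereal b" using assms(3) by (simp add: SUP_least)
  also have "\<dots> < ereal c" using assms(5) by simp
  also have "\<dots> \<le> (INF u\<in>B. ereal (E u))" using assms(4) by (simp add: INF_greatest)
  finally show "(SUP u\<in>A. ereal (E u)) < (INF u\<in>B. ereal (E u))" .
qed

theorem lemma3p10:
  fixes s1 s2 a :: real and g :: "real \<Rightarrow> real"
  assumes s: "0 < s1" "s1 < s2" "s2 < 1"
    and d: "2 * s1 < real CARD('n)" "real CARD('n) < 2 * s1 * s2 / (s2 - s1)"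
    and a: "a > 0"
    and G1: "continuous_on UNIV g" "\<And>t. g (- t) = - g t"
    and G2: "\<exists>\<alpha> \<beta>. 2 + 4 * s2 / real CARD('n) < \<alpha> \<and> \<alpha> < \<beta>
               \<and> \<beta> < 2 * real CARD('n) / (real CARD('n) - 2 * s1)
               \<and> (\<forall>t. \<alpha> * primitive g t \<le> g t * t \<and> g t * t \<le> \<beta> * primitive g t)"
  shows "\<exists>K>0.
    let A = {u :: real^'n \<Rightarrow> real. u \<in> S_sphere s1 s2 a \<and> frac_grad_sq s1 u + frac_grad_sq s2 u \<le> K};
        B = {u :: real^'n \<Rightarrow> real. u \<in> S_sphere s1 s2 a \<and> frac_grad_sq s1 u + frac_grad_sq s2 u = 2 * K}
    in 0 < (SUP u\<in>A. ereal (energy s1 s2 g u))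
       \<and> (SUP u\<in>A. ereal (energy s1 s2 g u)) < (INF u\<in>B. ereal (energy s1 s2 g u))"
proof -
  \<comment> \<open>The hypothesis \<open>d(2)\<close> only makes the range of exponents in \<open>G2\<close> nonempty.\<close>
  obtain \<alpha> \<beta> where \<alpha>\<beta>: "2 + 4 * s2 / real CARD('n) < \<alpha>" "\<alpha> < \<beta>"
      "\<beta> < 2 * real CARD('n) / (real CARD('n) - 2 * s1)"
    and growth: "\<And>t. \<alpha> * primitive g t \<le> g t * t \<and> g t * t \<le> \<beta> * primitive g t"
    using G2 by blast
  have "4 * s1 / real CARD('n) < 4 * s2 / real CARD('n)" using s by (simp add: divide_strict_right_mono)
  then have \<alpha>: "2 + 4 * s1 / real CARD('n) < \<alpha>" using \<alpha>\<beta>(1) by linarith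
  obtain K where K: "K > 0"
    and on_A: "\<And>u :: real^'n \<Rightarrow> real. u \<in> S_sphere s1 s2 a \<Longrightarrow> frac_grad_sq s1 u + frac_grad_sq s2 u \<le> K \<Longrightarrow>
      0 < energy s1 s2 g u \<and> energy s1 s2 g u \<le> K / 2"
    and on_B: "\<And>u :: real^'n \<Rightarrow> real. u \<in> S_sphere s1 s2 a \<Longrightarrow> frac_grad_sq s1 u + frac_grad_sq s2 u = 2 * K \<Longrightarrow>
      3 * K / 4 \<le> energy s1 s2 g u"
    using energy_mountain_pass_geometry[OF s(1) d(1) a G1 \<alpha> \<alpha>\<beta>(2,3) growth] by blast
  obtain u0 :: "real^'n \<Rightarrow> real" where u0: "u0 \<in> S_sphere s1 s2 a" "frac_grad_sq s1 u0 + frac_grad_sq s2 u0 \<le> K"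
    using exists_S_sphere_small_seminorms[OF s a K] by blast
  define A where "A = {u :: real^'n \<Rightarrow> real. u \<in> S_sphere s1 s2 a \<and> frac_grad_sq s1 u + frac_grad_sq s2 u \<le> K}"
  define B where "B = {u :: real^'n \<Rightarrow> real. u \<in> S_sphere s1 s2 a \<and> frac_grad_sq s1 u + frac_grad_sq s2 u = 2 * K}"
  have "K / 2 < 3 * K / 4" using K by simp
  then have "0 < (SUP u\<in>A. ereal (energy s1 s2 g u))"
    and "(SUP u\<in>A. ereal (energy s1 s2 g u)) < (INF u\<in>B. ereal (energy s1 s2 g u))"
    using u0 on_A[OF u0] on_A on_B unfolding A_def B_def
    by (intro ereal_SUP_lt_INF_of_bounds[where E="energy s1 s2 g" and b="K / 2" and c="3 * K / 4"]; blast)+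
  then show ?thesis using K unfolding Let_def A_def B_def by blast
qed

end
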